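(* Let $1\le p\le\infty$, let $\alpha \in L^{1}(\mathbb{R})$ and let $w\in C^{1}(\mathbb{R})$ with $w(0)=0$. Consider the Cauchy problem $$u_{tt}(x,t)=\int_{\mathbb{R}} \alpha(y-x)\, w\big(u(y,t)-u(x,t)\big)\,dy,\quad x\in\mathbb{R},\ t>0,\qquad u(x,0)=\varphi(x),\ u_t(x,0)=\psi(x).$$ Then for initial data $\varphi,\psi\in L^{p}(\mathbb{R})\cap L^\infty(\mathbb{R})$ there is some $T>0$ such that this Cauchy problem is well posed with solution in $C^{2}([0,T],L^{p}(\mathbb{R})\cap L^\infty(\mathbb{R}))$.
   Context: $L^p(\mathbb{R})\cap L^\infty(\mathbb{R})$ carries the norm $\|u\|_p+\|u\|_\infty$. "Well posed with solution in $C^2([0,T],X)$" means: there exists a unique solution $u\in C^2([0,T],X)$ of the Cauchy problem, and the solution depends continuously on the initial data $(\varphi,\psi)\in X\times X$ (in the norm of $C([0,T],X)$). *)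

theory Defs
  imports "HOL-Analysis.Analysis" "HOL-Probability.Essential_Supremum"
begin

text \<open>Exponent p ranges over [1, infinity] as an ennreal; p = top means L-infinity.
  Elements of the space are represented by real functions on the real line;
  equality in the space is equality almost everywhere.\<close>

definition Linf_norm :: "(real \<Rightarrow> real) \<Rightarrow> real" where
  "Linf_norm f = real_of_ereal (esssup lborel (\<lambda>x. ereal \<bar>f x\<bar>))"

definition Lp_norm :: "ennreal \<Rightarrow> (real \<Rightarrow> real) \<Rightarrow> real" where
  "Lp_norm p f = (if p = top then Linf_norm f
     else enn2real (\<integral>\<^sup>+ x. ennreal (\<bar>f x\<bar> powr enn2real p) \<partial>lborel) powr (1 / enn2real p))"

definition XSp :: "ennreal \<Rightarrow> (real \<Rightarrow> real) set" where
  "XSp p = {f. f \<in> borel_measurable lborel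
              \<and> (p \<noteq> top \<longrightarrow> (\<integral>\<^sup>+ x. ennreal (\<bar>f x\<bar> powr enn2real p) \<partial>lborel) < top)
              \<and> esssup lborel (\<lambda>x. ereal \<bar>f x\<bar>) < top}"

definition Xnorm :: "ennreal \<Rightarrow> (real \<Rightarrow> real) \<Rightarrow> real" where
  "Xnorm p f = Lp_norm p f + Linf_norm f"

definition X_continuous :: "ennreal \<Rightarrow> real \<Rightarrow> (real \<Rightarrow> real \<Rightarrow> real) \<Rightarrow> bool" where
  "X_continuous p T u \<longleftrightarrow> (\<forall>t\<in>{0..T}. u t \<in> XSp p \<and>
      ((\<lambda>s. Xnorm p (\<lambda>x. u s x - u t x)) \<longlongrightarrow> 0) (at t within {0..T}))"

definition X_has_derivative :: "ennreal \<Rightarrow> real \<Rightarrow> (real \<Rightarrow> real \<Rightarrow> real) \<Rightarrow> (real \<Rightarrow> real \<Rightarrow> real) \<Rightarrow> bool" where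
  "X_has_derivative p T u v \<longleftrightarrow> (\<forall>t\<in>{0..T}. u t \<in> XSp p \<and> v t \<in> XSp p \<and>
      ((\<lambda>s. Xnorm p (\<lambda>x. (u s x - u t x) / (s - t) - v t x)) \<longlongrightarrow> 0) (at t within {0..T}))"

definition X_C2 :: "ennreal \<Rightarrow> real \<Rightarrow> (real \<Rightarrow> real \<Rightarrow> real) \<Rightarrow> (real \<Rightarrow> real \<Rightarrow> real)
    \<Rightarrow> (real \<Rightarrow> real \<Rightarrow> real) \<Rightarrow> bool" where
  "X_C2 p T u u1 u2 \<longleftrightarrow> X_has_derivative p T u u1 \<and> X_has_derivative p T u1 u2
      \<and> X_continuous p T u2"

definition peri_rhs :: "(real \<Rightarrow> real) \<Rightarrow> (real \<Rightarrow> real) \<Rightarrow> (real \<Rightarrow> real) \<Rightarrow> real \<Rightarrow> real" where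
  "peri_rhs \<alpha> w v x = (\<integral> y. \<alpha> (y - x) * w (v y - v x) \<partial>lborel)"

definition is_solution :: "ennreal \<Rightarrow> (real \<Rightarrow> real) \<Rightarrow> (real \<Rightarrow> real) \<Rightarrow> real
    \<Rightarrow> (real \<Rightarrow> real) \<Rightarrow> (real \<Rightarrow> real) \<Rightarrow> (real \<Rightarrow> real \<Rightarrow> real) \<Rightarrow> bool" where
  "is_solution p \<alpha> w T \<phi> \<psi> u \<longleftrightarrow> (\<exists>u1 u2. X_C2 p T u u1 u2
      \<and> (\<forall>t\<in>{0<..T}. AE x in lborel. u2 t x = peri_rhs \<alpha> w (u t) x)
      \<and> (AE x in lborel. u 0 x = \<phi> x)
      \<and> (AE x in lborel. u1 0 x = \<psi> x))"

definition well_posed :: "ennreal \<Rightarrow> (real \<Rightarrow> real) \<Rightarrow> (real \<Rightarrow> real) \<Rightarrow> real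
    \<Rightarrow> (real \<Rightarrow> real) \<Rightarrow> (real \<Rightarrow> real) \<Rightarrow> bool" where
  "well_posed p \<alpha> w T \<phi> \<psi> \<longleftrightarrow>
     (\<exists>u. is_solution p \<alpha> w T \<phi> \<psi> u
        \<and> (\<forall>v. is_solution p \<alpha> w T \<phi> \<psi> v \<longrightarrow> (\<forall>t\<in>{0..T}. AE x in lborel. v t x = u t x))
        \<and> (\<forall>\<epsilon>>0. \<exists>\<delta>>0. \<forall>\<phi>' \<psi>'. \<phi>' \<in> XSp p \<and> \<psi>' \<in> XSp p
              \<and> Xnorm p (\<lambda>x. \<phi>' x - \<phi> x) + Xnorm p (\<lambda>x. \<psi>' x - \<psi> x) < \<delta> \<longrightarrow>
              (\<exists>v. is_solution p \<alpha> w T \<phi>' \<psi>' v)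
              \<and> (\<forall>v. is_solution p \<alpha> w T \<phi>' \<psi>' v \<longrightarrow>
                    (\<forall>t\<in>{0..T}. Xnorm p (\<lambda>x. v t x - u t x) < \<epsilon>))))"

end

theory Submission
  imports Defs
begin

text \<open>Writing \<open>F v x = \<integral> \<alpha>(y - x) w(v y - v x) dy\<close>, the equation is the autonomous first-order
  system \<open>(u, u\<^sub>t)' = (u\<^sub>t, F u)\<close>. On functions bounded by \<open>R\<close> in \<open>L\<^sup>\<infinity>\<close> the arguments of \<open>w\<close> stay in
  \<open>[-2R, 2R]\<close>, where \<open>w\<close> is Lipschitz; with \<open>w(0) = 0\<close> this bounds \<open>|F v - F v'|\<close> pointwise by
  \<open>|\<alpha>| \<star> |v - v'|\<close> plus \<open>\<parallel>\<alpha>\<parallel>\<^sub>1 |v - v'|\<close>, so by Young's inequality \<open>F\<close> maps \<open>L\<^sup>p \<inter> L\<^sup>\<infinity>\<close> into itself and is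
  Lipschitz on bounded sets. Picard iteration then gives a solution on an interval \<open>[0, T]\<close> depending
  only on the size of the data; as \<open>T\<close> times the Lipschitz constant is at most \<open>1/2\<close>, any two solutions
  satisfy \<open>\<parallel>z(t) - y(t)\<parallel> \<le> 2 \<parallel>z(0) - y(0)\<parallel>\<close>, which gives uniqueness and continuous dependence.\<close>

section \<open>The space \<open>L\<^sup>p \<inter> L\<^sup>\<infinity>\<close>\<close>

lemma enn2real_ge_1: "1 \<le> p \<Longrightarrow> p \<noteq> top \<Longrightarrow> 1 \<le> enn2real p"
  using enn2real_mono[of 1 p] by (simp add: less_top)

lemma esssup_abs_nonneg:
  fixes f :: "real \<Rightarrow> real"
  shows "0 \<le> esssup lborel (\<lambda>x. ereal \<bar>f x\<bar>)"
proof (cases "(\<lambda>x. ereal \<bar>f x\<bar>) \<in> borel_measurable lborel")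
  case True
  have "esssup lborel (\<lambda>x::real. (0::ereal)) \<le> esssup lborel (\<lambda>x. ereal \<bar>f x\<bar>)"
    by (rule esssup_mono) auto
  moreover have "esssup lborel (\<lambda>x::real. (0::ereal)) = 0"
    by (rule esssup_const) simp
  ultimately show ?thesis by simp
next
  case False
  then show ?thesis by (simp add: esssup_non_measurable)
qed

lemma Linf_norm_nonneg: "0 \<le> Linf_norm f"
  unfolding Linf_norm_def using esssup_abs_nonneg[of f] by (simp add: real_of_ereal_pos)

lemma AE_abs_le_Linf_norm:
  fixes f :: "real \<Rightarrow> real"
  assumes "esssup lborel (\<lambda>x. ereal \<bar>f x\<bar>) < top"
  shows "AE x in lborel. \<bar>f x\<bar> \<le> Linf_norm f"
proof -
  let ?e = "esssup lborel (\<lambda>x. ereal \<bar>f x\<bar>)"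
  have "?e = ereal (Linf_norm f)"
    using assms esssup_abs_nonneg[of f] unfolding Linf_norm_def by (cases ?e) auto
  then show ?thesis
    using esssup_AE[of "\<lambda>x. ereal \<bar>f x\<bar>" lborel] by (auto elim!: eventually_mono)
qed

lemma Linf_norm_le:
  fixes f :: "real \<Rightarrow> real"
  assumes "f \<in> borel_measurable lborel" "0 \<le> c" "AE x in lborel. \<bar>f x\<bar> \<le> c"
  shows "Linf_norm f \<le> c" "esssup lborel (\<lambda>x. ereal \<bar>f x\<bar>) < top"
proof -
  have le: "esssup lborel (\<lambda>x. ereal \<bar>f x\<bar>) \<le> ereal c"
    by (rule esssup_I) (use assms in auto)
  then show "esssup lborel (\<lambda>x. ereal \<bar>f x\<bar>) < top"
    by (rule le_less_trans) (simp add: top_ereal_def)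
  show "Linf_norm f \<le> c"
    using le esssup_abs_nonneg[of f] assms(2) unfolding Linf_norm_def
    by (cases "esssup lborel (\<lambda>x. ereal \<bar>f x\<bar>)") auto
qed

lemma Linf_norm_cong_AE:
  assumes "f \<in> borel_measurable lborel" "g \<in> borel_measurable lborel" "AE x in lborel. f x = g x"
  shows "Linf_norm f = Linf_norm g"
  unfolding Linf_norm_def
  by (subst esssup_AE_cong[of "\<lambda>x. ereal \<bar>f x\<bar>" lborel "\<lambda>x. ereal \<bar>g x\<bar>"]) (use assms in auto)

definition lp_integral :: "real \<Rightarrow> (real \<Rightarrow> real) \<Rightarrow> ennreal" where
  "lp_integral P f = (\<integral>\<^sup>+ x. ennreal (\<bar>f x\<bar> powr P) \<partial>lborel)"

lemma Lp_norm_finite: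
  "p \<noteq> top \<Longrightarrow> Lp_norm p f = enn2real (lp_integral (enn2real p) f) powr (1 / enn2real p)"
  by (simp add: Lp_norm_def lp_integral_def)

lemma XSp_finite_iff:
  "p \<noteq> top \<Longrightarrow> f \<in> XSp p \<longleftrightarrow> f \<in> borel_measurable lborel \<and> lp_integral (enn2real p) f < top
     \<and> esssup lborel (\<lambda>x. ereal \<bar>f x\<bar>) < top"
  by (simp add: XSp_def lp_integral_def)

lemma XSp_top_iff:
  "f \<in> XSp top \<longleftrightarrow> f \<in> borel_measurable lborel \<and> esssup lborel (\<lambda>x. ereal \<bar>f x\<bar>) < top"
  by (simp add: XSp_def)

lemma XSp_measurable: "f \<in> XSp p \<Longrightarrow> f \<in> borel_measurable lborel"
  by (simp add: XSp_def)

lemma XSp_esssup_finite: "f \<in> XSp p \<Longrightarrow> esssup lborel (\<lambda>x. ereal \<bar>f x\<bar>) < top"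
  by (simp add: XSp_def)

lemma Lp_norm_nonneg: "0 \<le> Lp_norm p f"
  by (simp add: Lp_norm_def Linf_norm_nonneg)

lemma Xnorm_nonneg: "0 \<le> Xnorm p f"
  by (simp add: Xnorm_def Lp_norm_nonneg Linf_norm_nonneg)

lemma Linf_norm_le_Xnorm: "Linf_norm f \<le> Xnorm p f"
  by (simp add: Xnorm_def Lp_norm_nonneg)

lemma lp_integral_cong_AE: "AE x in lborel. f x = g x \<Longrightarrow> lp_integral P f = lp_integral P g"
  unfolding lp_integral_def by (rule nn_integral_cong_AE) (auto elim!: eventually_mono)

lemma Xnorm_cong_AE:
  assumes "f \<in> borel_measurable lborel" "g \<in> borel_measurable lborel" "AE x in lborel. f x = g x"
  shows "Xnorm p f = Xnorm p g"
  using Linf_norm_cong_AE[OF assms] lp_integral_cong_AE[OF assms(3)]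
  by (simp add: Xnorm_def Lp_norm_def lp_integral_def)

lemma lp_integral_eq_Lp_norm_powr:
  assumes "p \<noteq> top" "1 \<le> p" "lp_integral (enn2real p) f < top"
  shows "lp_integral (enn2real p) f = ennreal (Lp_norm p f powr enn2real p)"
proof -
  have "Lp_norm p f powr enn2real p = enn2real (lp_integral (enn2real p) f)"
    using enn2real_ge_1[OF assms(2,1)] by (simp add: Lp_norm_finite[OF assms(1)] powr_powr)
  then show ?thesis using assms(3) by (simp add: less_top)
qed

lemma Lp_norm_le_of_lp_integral_le:
  assumes "p \<noteq> top" "1 \<le> p" "0 \<le> c" "lp_integral (enn2real p) f \<le> ennreal (c powr enn2real p)"
  shows "Lp_norm p f \<le> c"
proof -
  have P: "1 \<le> enn2real p" using enn2real_ge_1 assms by auto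
  have "enn2real (lp_integral (enn2real p) f) \<le> c powr enn2real p"
    using enn2real_mono[OF assms(4)] by simp
  then have "enn2real (lp_integral (enn2real p) f) powr (1 / enn2real p)
      \<le> (c powr enn2real p) powr (1 / enn2real p)"
    by (intro powr_mono2) auto
  also have "\<dots> = c" using P assms(3) by (simp add: powr_powr)
  finally show ?thesis by (simp add: Lp_norm_finite[OF assms(1)])
qed

lemma AE_zero_of_lp_integral_zero:
  assumes "f \<in> borel_measurable lborel" "lp_integral P f = 0"
  shows "AE x in lborel. f x = 0"
proof -
  have "AE x in lborel. ennreal (\<bar>f x\<bar> powr P) = 0"
    using assms by (subst nn_integral_0_iff_AE[symmetric]) (auto simp: lp_integral_def)
  then show ?thesis by (auto elim!: eventually_mono)
qed

lemma powr_convex_combination_le: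
  fixes P u y t :: real
  assumes "1 \<le> P" "0 \<le> u" "0 \<le> y" "0 \<le> t" "t \<le> 1"
  shows "(t * u + (1 - t) * y) powr P \<le> t * u powr P + (1 - t) * y powr P"
proof -
  have single: "(s * v) powr P \<le> s * v powr P" if "0 \<le> s" "s \<le> 1" "0 \<le> v" for s v :: real
  proof -
    have "s powr P \<le> s"
      using powr_le_one_le[of s P] that assms(1) by (cases "s = 0") auto
    then show ?thesis using that by (simp add: powr_mult mult_right_mono)
  qed
  show ?thesis
  proof (cases "u > 0 \<and> y > 0")
    case True
    have "(\<lambda>x::real. x powr P) ((1 - (1 - t)) *\<^sub>R u + (1 - t) *\<^sub>R y)
        \<le> (1 - (1 - t)) * u powr P + (1 - t) * y powr P"
      by (rule convex_onD[OF powr_convex[OF assms(1)]]) (use assms True in auto)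
    then show ?thesis by simp
  next
    case False
    then have "u = 0 \<or> y = 0" using assms by linarith
    then show ?thesis using single[of "1 - t" y] single[of t u] assms by auto
  qed
qed

lemma powr_eq_mult_powr_minus_one: "0 < d \<Longrightarrow> d powr P = d * d powr (P - 1)"
  for d P :: real
  using powr_mult_base[of d "P - 1"] by simp

lemma abs_add_powr_le:
  fixes P a b u v :: real
  assumes P: "1 \<le> P" and ab: "0 < a" "0 < b"
  shows "\<bar>u + v\<bar> powr P
    \<le> (a + b) powr (P - 1) / a powr (P - 1) * \<bar>u\<bar> powr P + (a + b) powr (P - 1) / b powr (P - 1) * \<bar>v\<bar> powr P"
proof -
  define t where "t = a / (a + b)"
  have t: "0 \<le> t" "t \<le> 1" "(a + b) * t = a" "(a + b) * (1 - t) = b"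
    using ab by (auto simp: t_def field_simps)
  have scaled: "s powr P * (c / s * (z / c) powr P) = s powr (P - 1) / c powr (P - 1) * z powr P"
    if "0 < s" "0 < c" "0 \<le> z" for s c z :: real
    using that by (simp add: powr_divide powr_eq_mult_powr_minus_one[of c P] powr_eq_mult_powr_minus_one[of s P])
  have "\<bar>u + v\<bar> \<le> (a + b) * (t * (\<bar>u\<bar> / a) + (1 - t) * (\<bar>v\<bar> / b))"
    using abs_triangle_ineq[of u v] ab
    by (simp add: distrib_left mult.assoc[symmetric] t(3,4))
  then have "\<bar>u + v\<bar> powr P \<le> ((a + b) * (t * (\<bar>u\<bar> / a) + (1 - t) * (\<bar>v\<bar> / b))) powr P"
    using P by (intro powr_mono2) auto
  also have "\<dots> = (a + b) powr P * (t * (\<bar>u\<bar> / a) + (1 - t) * (\<bar>v\<bar> / b)) powr P"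
    using ab t by (auto intro: powr_mult)
  also have "\<dots> \<le> (a + b) powr P * (t * (\<bar>u\<bar> / a) powr P + (1 - t) * (\<bar>v\<bar> / b) powr P)"
    using ab t P by (intro mult_left_mono powr_convex_combination_le) auto
  also have "\<dots> = (a + b) powr (P - 1) / a powr (P - 1) * \<bar>u\<bar> powr P
      + (a + b) powr (P - 1) / b powr (P - 1) * \<bar>v\<bar> powr P"
  proof -
    have "1 - t = b / (a + b)" using ab by (simp add: t_def field_simps)
    then show ?thesis
      using scaled[of "a + b" a "\<bar>u\<bar>"] scaled[of "a + b" b "\<bar>v\<bar>"] ab by (simp add: t_def distrib_left)
  qed
  finally show ?thesis .
qed

lemma lp_integral_add_le_pos:
  assumes P: "1 \<le> P" and ab: "0 < a" "0 < b"
    and f: "f \<in> borel_measurable lborel" "lp_integral P f = ennreal (a powr P)"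
    and g: "g \<in> borel_measurable lborel" "lp_integral P g = ennreal (b powr P)"
  shows "lp_integral P (\<lambda>x. f x + g x) \<le> ennreal ((a + b) powr P)"
proof -
  define c1 c2 where "c1 = (a + b) powr (P - 1) / a powr (P - 1)" and "c2 = (a + b) powr (P - 1) / b powr (P - 1)"
  have c: "0 \<le> c1" "0 \<le> c2" by (simp_all add: c1_def c2_def)
  have "lp_integral P (\<lambda>x. f x + g x)
      \<le> (\<integral>\<^sup>+ x. ennreal c1 * ennreal (\<bar>f x\<bar> powr P) + ennreal c2 * ennreal (\<bar>g x\<bar> powr P) \<partial>lborel)"
    unfolding lp_integral_def
  proof (rule nn_integral_mono)
    fix x
    have "\<bar>f x + g x\<bar> powr P \<le> c1 * \<bar>f x\<bar> powr P + c2 * \<bar>g x\<bar> powr P"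
      unfolding c1_def c2_def by (rule abs_add_powr_le[OF P ab])
    then have "ennreal (\<bar>f x + g x\<bar> powr P) \<le> ennreal (c1 * \<bar>f x\<bar> powr P + c2 * \<bar>g x\<bar> powr P)"
      by (rule ennreal_leI)
    also have "\<dots> = ennreal c1 * ennreal (\<bar>f x\<bar> powr P) + ennreal c2 * ennreal (\<bar>g x\<bar> powr P)"
      using c by (simp add: ennreal_mult ennreal_plus)
    finally show "ennreal (\<bar>f x + g x\<bar> powr P)
        \<le> ennreal c1 * ennreal (\<bar>f x\<bar> powr P) + ennreal c2 * ennreal (\<bar>g x\<bar> powr P)" .
  qed
  also have "\<dots> = ennreal c1 * lp_integral P f + ennreal c2 * lp_integral P g"
    unfolding lp_integral_def using f g by (subst nn_integral_add) (auto simp: nn_integral_cmult)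
  also have "\<dots> = ennreal (c1 * a powr P + c2 * b powr P)"
    using c by (simp add: f(2) g(2) ennreal_mult ennreal_plus)
  also have "c1 * a powr P + c2 * b powr P = (a + b) powr P"
    using ab by (simp add: c1_def c2_def powr_eq_mult_powr_minus_one[of a P] powr_eq_mult_powr_minus_one[of b P]
        powr_eq_mult_powr_minus_one[of "a + b" P] algebra_simps)
  finally show ?thesis .
qed

lemma lp_integral_add_AE_zero:
  assumes "h \<in> borel_measurable lborel" "lp_integral P h = 0"
  shows "lp_integral P (\<lambda>x. h x + k x) = lp_integral P k"
proof -
  have "AE x in lborel. h x = 0" using AE_zero_of_lp_integral_zero assms by blast
  then show ?thesis by (intro lp_integral_cong_AE) (auto elim!: eventually_mono)
qed

lemma lp_integral_add_le:
  assumes p: "p \<noteq> top" "1 \<le> p"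
    and f: "f \<in> borel_measurable lborel" "lp_integral (enn2real p) f < top"
    and g: "g \<in> borel_measurable lborel" "lp_integral (enn2real p) g < top"
  shows "lp_integral (enn2real p) (\<lambda>x. f x + g x) \<le> ennreal ((Lp_norm p f + Lp_norm p g) powr enn2real p)"
proof -
  define P a b where "P = enn2real p" and "a = Lp_norm p f" and "b = Lp_norm p g"
  have P: "1 \<le> P" using enn2real_ge_1 p by (auto simp: P_def)
  have Ia: "lp_integral P f = ennreal (a powr P)"
    using lp_integral_eq_Lp_norm_powr[OF p f(2)] by (simp add: a_def P_def)
  have Ib: "lp_integral P g = ennreal (b powr P)"
    using lp_integral_eq_Lp_norm_powr[OF p g(2)] by (simp add: b_def P_def)
  consider "a = 0" | "b = 0" | "0 < a" "0 < b"
    using Lp_norm_nonneg[of p f] Lp_norm_nonneg[of p g] by (fastforce simp: a_def b_def)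
  then show ?thesis
  proof cases
    case 1
    then show ?thesis using lp_integral_add_AE_zero[OF f(1)] Ia Ib P by (simp add: P_def a_def b_def)
  next
    case 2
    then show ?thesis
      using lp_integral_add_AE_zero[OF g(1), of _ f] Ia Ib P by (simp add: add.commute P_def a_def b_def)
  next
    case 3
    then show ?thesis
      using lp_integral_add_le_pos[OF P 3 f(1) Ia g(1) Ib] by (simp add: P_def a_def b_def)
  qed
qed

lemma XSp_add:
  assumes "1 \<le> p" "f \<in> XSp p" "g \<in> XSp p"
  shows "(\<lambda>x. f x + g x) \<in> XSp p" "Xnorm p (\<lambda>x. f x + g x) \<le> Xnorm p f + Xnorm p g"
proof -
  have m: "f \<in> borel_measurable lborel" "g \<in> borel_measurable lborel"
    and ess: "esssup lborel (\<lambda>x. ereal \<bar>f x\<bar>) < top" "esssup lborel (\<lambda>x. ereal \<bar>g x\<bar>) < top"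
    using assms by (auto simp: XSp_def)
  have sum_meas: "(\<lambda>x. f x + g x) \<in> borel_measurable lborel" using m by measurable
  have "AE x in lborel. \<bar>f x + g x\<bar> \<le> Linf_norm f + Linf_norm g"
    using AE_abs_le_Linf_norm[OF ess(1)] AE_abs_le_Linf_norm[OF ess(2)] by eventually_elim auto
  from Linf_norm_le[OF sum_meas _ this]
  have L: "Linf_norm (\<lambda>x. f x + g x) \<le> Linf_norm f + Linf_norm g"
    "esssup lborel (\<lambda>x. ereal \<bar>f x + g x\<bar>) < top"
    by (auto simp: Linf_norm_nonneg add_nonneg_nonneg)
  have "(\<lambda>x. f x + g x) \<in> XSp p \<and> Lp_norm p (\<lambda>x. f x + g x) \<le> Lp_norm p f + Lp_norm p g"
  proof (cases "p = top")
    case True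
    then show ?thesis using L sum_meas by (simp add: XSp_top_iff Lp_norm_def)
  next
    case False
    have fi: "lp_integral (enn2real p) f < top" "lp_integral (enn2real p) g < top"
      using assms False by (auto simp: XSp_finite_iff)
    note I = lp_integral_add_le[OF False assms(1) m(1) fi(1) m(2) fi(2)]
    have "lp_integral (enn2real p) (\<lambda>x. f x + g x) < top"
      using I by (rule le_less_trans) simp
    moreover have "Lp_norm p (\<lambda>x. f x + g x) \<le> Lp_norm p f + Lp_norm p g"
      by (rule Lp_norm_le_of_lp_integral_le[OF False assms(1) _ I]) (simp add: Lp_norm_nonneg)
    ultimately show ?thesis using L sum_meas False by (simp add: XSp_finite_iff)
  qed
  then show "(\<lambda>x. f x + g x) \<in> XSp p" "Xnorm p (\<lambda>x. f x + g x) \<le> Xnorm p f + Xnorm p g"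
    using L by (auto simp: Xnorm_def)
qed

lemma Linf_norm_zero: "Linf_norm (\<lambda>x. 0) = 0"
  using Linf_norm_le[of "\<lambda>x. 0" 0] Linf_norm_nonneg[of "\<lambda>x. 0"] by auto

lemma XSp_zero: "(\<lambda>x. 0) \<in> XSp p"
  using Linf_norm_le[of "\<lambda>x. 0" 0] by (auto simp: XSp_def)

lemma Xnorm_zero: "Xnorm p (\<lambda>x. 0) = 0"
  by (cases "p = top") (auto simp: Xnorm_def Lp_norm_def Linf_norm_zero)

lemma Linf_norm_scale:
  assumes "f \<in> borel_measurable lborel" "esssup lborel (\<lambda>x. ereal \<bar>f x\<bar>) < top"
  shows "Linf_norm (\<lambda>x. c * f x) = \<bar>c\<bar> * Linf_norm f"
    "esssup lborel (\<lambda>x. ereal \<bar>c * f x\<bar>) < top"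
proof -
  have "AE x in lborel. \<bar>c * f x\<bar> \<le> \<bar>c\<bar> * Linf_norm f"
    using AE_abs_le_Linf_norm[OF assms(2)] by (auto elim!: eventually_mono simp: abs_mult mult_left_mono)
  from Linf_norm_le[OF _ _ this] assms(1)
  have L: "Linf_norm (\<lambda>x. c * f x) \<le> \<bar>c\<bar> * Linf_norm f"
    and es: "esssup lborel (\<lambda>x. ereal \<bar>c * f x\<bar>) < top"
    by (auto simp: Linf_norm_nonneg)
  show "esssup lborel (\<lambda>x. ereal \<bar>c * f x\<bar>) < top" by (rule es)
  show "Linf_norm (\<lambda>x. c * f x) = \<bar>c\<bar> * Linf_norm f"
  proof (cases "c = 0")
    case True
    then show ?thesis using Linf_norm_zero by simp
  next
    case False
    have "AE x in lborel. \<bar>f x\<bar> \<le> Linf_norm (\<lambda>x. c * f x) / \<bar>c\<bar>"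
      using AE_abs_le_Linf_norm[OF es] False
      by (auto elim!: eventually_mono simp: abs_mult field_simps)
    from Linf_norm_le(1)[OF assms(1) _ this]
    have "Linf_norm f \<le> Linf_norm (\<lambda>x. c * f x) / \<bar>c\<bar>" by (simp add: Linf_norm_nonneg)
    then show ?thesis using L False by (simp add: field_simps)
  qed
qed

lemma XSp_scale:
  assumes "1 \<le> p" "f \<in> XSp p"
  shows "(\<lambda>x. c * f x) \<in> XSp p" "Xnorm p (\<lambda>x. c * f x) = \<bar>c\<bar> * Xnorm p f"
proof -
  have m: "f \<in> borel_measurable lborel" "esssup lborel (\<lambda>x. ereal \<bar>f x\<bar>) < top"
    using assms by (auto simp: XSp_def)
  note L = Linf_norm_scale[OF m, of c]
  have "(\<lambda>x. c * f x) \<in> XSp p \<and> Lp_norm p (\<lambda>x. c * f x) = \<bar>c\<bar> * Lp_norm p f"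
  proof (cases "p = top")
    case True
    then show ?thesis using L m by (simp add: XSp_top_iff Lp_norm_def)
  next
    case False
    have P: "1 \<le> enn2real p" using enn2real_ge_1 assms False by auto
    have fi: "lp_integral (enn2real p) f < top" using assms False by (auto simp: XSp_finite_iff)
    have I: "lp_integral (enn2real p) (\<lambda>x. c * f x)
        = ennreal (\<bar>c\<bar> powr enn2real p) * lp_integral (enn2real p) f"
      unfolding lp_integral_def using P m
      by (subst nn_integral_cmult[symmetric]) (auto simp: abs_mult powr_mult ennreal_mult)
    have "lp_integral (enn2real p) (\<lambda>x. c * f x) < top" using I fi by (simp add: ennreal_mult_less_top)
    moreover have "Lp_norm p (\<lambda>x. c * f x) = \<bar>c\<bar> * Lp_norm p f"
      using P by (simp add: Lp_norm_finite[OF False] I enn2real_mult powr_mult powr_powr)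
    ultimately show ?thesis using L m False by (simp add: XSp_finite_iff)
  qed
  then show "(\<lambda>x. c * f x) \<in> XSp p" "Xnorm p (\<lambda>x. c * f x) = \<bar>c\<bar> * Xnorm p f"
    using L by (auto simp: Xnorm_def algebra_simps)
qed

lemma XSp_diff:
  assumes "1 \<le> p" "f \<in> XSp p" "g \<in> XSp p"
  shows "(\<lambda>x. f x - g x) \<in> XSp p"
  using XSp_add(1)[OF assms(1,2) XSp_scale(1)[OF assms(1,3), where c="-1"]] by simp

lemma Xnorm_diff_commute:
  assumes "1 \<le> p" "f \<in> XSp p" "g \<in> XSp p"
  shows "Xnorm p (\<lambda>x. f x - g x) = Xnorm p (\<lambda>x. g x - f x)"
  using XSp_scale(2)[OF assms(1) XSp_diff[OF assms], of "-1"] by simp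

lemma Xnorm_diff_triangle:
  assumes "1 \<le> p" "f \<in> XSp p" "g \<in> XSp p" "h \<in> XSp p"
  shows "Xnorm p (\<lambda>x. f x - h x) \<le> Xnorm p (\<lambda>x. f x - g x) + Xnorm p (\<lambda>x. g x - h x)"
  using XSp_add(2)[OF assms(1) XSp_diff[OF assms(1,2,3)] XSp_diff[OF assms(1,3,4)]] by simp

lemma AE_zero_of_Xnorm_zero:
  assumes "f \<in> XSp p" "Xnorm p f = 0"
  shows "AE x in lborel. f x = 0"
proof -
  have "Linf_norm f = 0"
    using assms(2) Lp_norm_nonneg[of p f] Linf_norm_nonneg[of f] by (simp add: Xnorm_def)
  then show ?thesis
    using AE_abs_le_Linf_norm[OF XSp_esssup_finite[OF assms(1)]] by (auto elim!: eventually_mono)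
qed

lemma XSp_dominated:
  assumes p: "1 \<le> p" and g: "g \<in> XSp p" and f: "f \<in> borel_measurable lborel"
    and le: "AE x in lborel. \<bar>f x\<bar> \<le> \<bar>g x\<bar>"
  shows "f \<in> XSp p" "Xnorm p f \<le> Xnorm p g"
proof -
  have "AE x in lborel. \<bar>f x\<bar> \<le> Linf_norm g"
    using le AE_abs_le_Linf_norm[OF XSp_esssup_finite[OF g]] by eventually_elim auto
  note L = Linf_norm_le[OF f Linf_norm_nonneg this]
  have "f \<in> XSp p \<and> Lp_norm p f \<le> Lp_norm p g"
  proof (cases "p = top")
    case True
    then show ?thesis using L f by (simp add: XSp_top_iff Lp_norm_def)
  next
    case False
    have P: "1 \<le> enn2real p" using enn2real_ge_1 p False by auto
    have gi: "lp_integral (enn2real p) g < top" using g False by (simp add: XSp_finite_iff)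
    have "lp_integral (enn2real p) f \<le> lp_integral (enn2real p) g"
      unfolding lp_integral_def using le P
      by (intro nn_integral_mono_AE) (auto elim!: eventually_mono intro!: ennreal_leI powr_mono2)
    also have "\<dots> = ennreal (Lp_norm p g powr enn2real p)"
      by (rule lp_integral_eq_Lp_norm_powr[OF False p gi])
    finally have I: "lp_integral (enn2real p) f \<le> ennreal (Lp_norm p g powr enn2real p)" .
    have "lp_integral (enn2real p) f < top" using I by (rule le_less_trans) simp
    moreover have "Lp_norm p f \<le> Lp_norm p g"
      by (rule Lp_norm_le_of_lp_integral_le[OF False p Lp_norm_nonneg I])
    ultimately show ?thesis using L f False by (simp add: XSp_finite_iff)
  qed
  then show "f \<in> XSp p" "Xnorm p f \<le> Xnorm p g" using L by (auto simp: Xnorm_def)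
qed

lemma AE_convergent_of_Xnorm_Cauchy:
  assumes p: "1 \<le> p" and f: "\<And>n. f n \<in> XSp p"
    and Cauchy: "\<And>\<epsilon>. \<epsilon> > 0 \<Longrightarrow> \<exists>N. \<forall>n\<ge>N. \<forall>m\<ge>N. Xnorm p (\<lambda>x. f n x - f m x) < \<epsilon>"
  shows "AE x in lborel. convergent (\<lambda>n. f n x)"
proof -
  have "\<exists>N. \<forall>n\<ge>N. \<forall>m\<ge>N. Xnorm p (\<lambda>x. f n x - f m x) < 1 / Suc k" for k
    using Cauchy[of "1 / Suc k"] by simp
  then obtain N where N: "\<And>k n m. N k \<le> n \<Longrightarrow> N k \<le> m \<Longrightarrow> Xnorm p (\<lambda>x. f n x - f m x) < 1 / Suc k"
    by metis
  have "AE x in lborel. N k \<le> n \<longrightarrow> N k \<le> m \<longrightarrow> \<bar>f n x - f m x\<bar> < 1 / Suc k" for k n m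
  proof (cases "N k \<le> n \<and> N k \<le> m")
    case True
    have "AE x in lborel. \<bar>f n x - f m x\<bar> \<le> Linf_norm (\<lambda>x. f n x - f m x)"
      by (rule AE_abs_le_Linf_norm[OF XSp_esssup_finite[OF XSp_diff[OF p f f]]])
    then show ?thesis
      using N[of k n m] Linf_norm_le_Xnorm[of "\<lambda>x. f n x - f m x" p] True
      by (auto elim!: eventually_mono)
  qed auto
  then have "AE x in lborel. \<forall>k n m. N k \<le> n \<longrightarrow> N k \<le> m \<longrightarrow> \<bar>f n x - f m x\<bar> < 1 / Suc k"
    by (simp add: AE_all_countable)
  then show ?thesis
  proof eventually_elim
    case (elim x)
    have "Cauchy (\<lambda>n. f n x)"
    proof (rule metric_CauchyI)
      fix \<epsilon> :: real
      assume "\<epsilon> > 0"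
      then obtain k where "1 / Suc k < \<epsilon>"
        using nat_approx_posE by blast
      then show "\<exists>M. \<forall>m\<ge>M. \<forall>n\<ge>M. dist (f m x) (f n x) < \<epsilon>"
        using elim by (intro exI[of _ "N k"]) (force simp: dist_real_def)
    qed
    then show ?case by (simp add: Cauchy_convergent_iff)
  qed
qed

lemma lp_integral_le_liminf:
  assumes P: "0 < P" and h: "\<And>m. h m \<in> borel_measurable lborel"
    and lim: "AE x in lborel. (\<lambda>m. h m x) \<longlonglongrightarrow> g x"
  shows "lp_integral P g \<le> liminf (\<lambda>m. lp_integral P (h m))"
proof -
  have "lp_integral P g = (\<integral>\<^sup>+ x. liminf (\<lambda>m. ennreal (\<bar>h m x\<bar> powr P)) \<partial>lborel)"
    unfolding lp_integral_def
  proof (rule nn_integral_cong_AE)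
    show "AE x in lborel. ennreal (\<bar>g x\<bar> powr P) = liminf (\<lambda>m. ennreal (\<bar>h m x\<bar> powr P))"
      using lim
    proof eventually_elim
      case (elim x)
      have "(\<lambda>m. ennreal (\<bar>h m x\<bar> powr P)) \<longlonglongrightarrow> ennreal (\<bar>g x\<bar> powr P)"
        using P elim by (intro tendsto_ennrealI tendsto_powr2 tendsto_intros) auto
      then show ?case by (rule lim_imp_Liminf[symmetric, rotated]) simp
    qed
  qed
  also have "\<dots> \<le> liminf (\<lambda>m. lp_integral P (h m))"
    unfolding lp_integral_def using h by (intro nn_integral_liminf) simp
  finally show ?thesis .
qed

lemma AE_abs_diff_limit_le:
  assumes p: "1 \<le> p" and f: "\<And>n. f n \<in> XSp p"
    and lim: "AE x in lborel. (\<lambda>m. f m x) \<longlonglongrightarrow> g x"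
    and bound: "\<And>m. N \<le> m \<Longrightarrow> Xnorm p (\<lambda>x. f n x - f m x) \<le> e"
  shows "AE x in lborel. \<bar>f n x - g x\<bar> \<le> e"
proof -
  have "AE x in lborel. N \<le> m \<longrightarrow> \<bar>f n x - f m x\<bar> \<le> e" for m
  proof (cases "N \<le> m")
    case True
    have "AE x in lborel. \<bar>f n x - f m x\<bar> \<le> Linf_norm (\<lambda>x. f n x - f m x)"
      by (rule AE_abs_le_Linf_norm[OF XSp_esssup_finite[OF XSp_diff[OF p f f]]])
    then show ?thesis
      using bound[OF True] Linf_norm_le_Xnorm[of "\<lambda>x. f n x - f m x" p] by (auto elim!: eventually_mono)
  qed simp
  then have "AE x in lborel. \<forall>m. N \<le> m \<longrightarrow> \<bar>f n x - f m x\<bar> \<le> e"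
    by (simp add: AE_all_countable)
  with lim show ?thesis
  proof eventually_elim
    case (elim x)
    show ?case
    proof (rule LIMSEQ_le_const2)
      show "(\<lambda>m. \<bar>f n x - f m x\<bar>) \<longlonglongrightarrow> \<bar>f n x - g x\<bar>" by (intro tendsto_intros elim)
    qed (use elim in auto)
  qed
qed

text \<open>The factor 2 accounts for the two summands of the norm.\<close>
lemma Xnorm_diff_limit_le:
  assumes p: "1 \<le> p" and f: "\<And>n. f n \<in> XSp p" and g: "g \<in> borel_measurable lborel"
    and lim: "AE x in lborel. (\<lambda>m. f m x) \<longlonglongrightarrow> g x"
    and bound: "\<And>m. N \<le> m \<Longrightarrow> Xnorm p (\<lambda>x. f n x - f m x) \<le> e"
  shows "(\<lambda>x. f n x - g x) \<in> XSp p" "Xnorm p (\<lambda>x. f n x - g x) \<le> 2 * e"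
proof -
  have e0: "0 \<le> e" using bound[of N] Xnorm_nonneg[of p] by (meson order_trans le_refl)
  have fm[measurable]: "f m \<in> borel_measurable lborel" for m using f[of m] by (rule XSp_measurable)
  have diff_meas: "(\<lambda>x. f n x - g x) \<in> borel_measurable lborel" using g by measurable
  have L: "Linf_norm (\<lambda>x. f n x - g x) \<le> e" "esssup lborel (\<lambda>x. ereal \<bar>f n x - g x\<bar>) < top"
    using Linf_norm_le[OF diff_meas e0 AE_abs_diff_limit_le[OF p f lim bound]] by blast+
  have "(\<lambda>x. f n x - g x) \<in> XSp p \<and> Lp_norm p (\<lambda>x. f n x - g x) \<le> e"
  proof (cases "p = top")
    case True
    then show ?thesis using L diff_meas by (simp add: XSp_top_iff Lp_norm_def)
  next
    case False
    define P where "P = enn2real p"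
    have P: "1 \<le> P" using enn2real_ge_1 p False by (auto simp: P_def)
    have "AE x in lborel. (\<lambda>m. f n x - f m x) \<longlonglongrightarrow> f n x - g x"
      using lim by eventually_elim (intro tendsto_intros)
    then have "lp_integral P (\<lambda>x. f n x - g x) \<le> liminf (\<lambda>m. lp_integral P (\<lambda>x. f n x - f m x))"
      using P by (intro lp_integral_le_liminf) auto
    also have "\<dots> \<le> liminf (\<lambda>m. ennreal (e powr P))"
    proof (rule Liminf_mono, unfold eventually_sequentially, intro exI allI impI)
      fix m
      assume m: "N \<le> m"
      have "(\<lambda>x. f n x - f m x) \<in> XSp p" by (rule XSp_diff[OF p f f])
      then have "lp_integral P (\<lambda>x. f n x - f m x) = ennreal (Lp_norm p (\<lambda>x. f n x - f m x) powr P)"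
        unfolding P_def using False by (intro lp_integral_eq_Lp_norm_powr[OF False p]) (simp add: XSp_finite_iff)
      also have "\<dots> \<le> ennreal (e powr P)"
        using bound[OF m] Lp_norm_nonneg[of p "\<lambda>x. f n x - f m x"] Linf_norm_nonneg[of "\<lambda>x. f n x - f m x"] P
        by (intro ennreal_leI powr_mono2) (auto simp: Xnorm_def)
      finally show "lp_integral P (\<lambda>x. f n x - f m x) \<le> ennreal (e powr P)" .
    qed
    finally have I: "lp_integral P (\<lambda>x. f n x - g x) \<le> ennreal (e powr P)"
      by (simp add: Liminf_const)
    have "lp_integral P (\<lambda>x. f n x - g x) < top" using I by (rule le_less_trans) simp
    moreover have "Lp_norm p (\<lambda>x. f n x - g x) \<le> e"
      by (rule Lp_norm_le_of_lp_integral_le[OF False p e0]) (use I in \<open>simp add: P_def\<close>)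
    ultimately show ?thesis using L diff_meas False by (simp add: XSp_finite_iff P_def)
  qed
  then show "(\<lambda>x. f n x - g x) \<in> XSp p" "Xnorm p (\<lambda>x. f n x - g x) \<le> 2 * e"
    using L by (auto simp: Xnorm_def)
qed

section \<open>A Banach space containing every \<open>L\<^sup>p \<inter> L\<^sup>\<infinity>\<close>\<close>

text \<open>A type cannot depend on the exponent \<open>p\<close>, so all exponents are treated at once: the space
  consists of uniformly bounded families \<open>F q \<in> XSp (max q 1)\<close> modulo equality almost everywhere,
  with the supremum norm. Each \<open>XSp p\<close> embeds isometrically as the families supported at \<open>q = p\<close>.\<close>

definition bounded_X_family :: "(ennreal \<Rightarrow> real \<Rightarrow> real) \<Rightarrow> bool" where
  "bounded_X_family F \<longleftrightarrow>
     (\<forall>q. F q \<in> XSp (max q 1)) \<and> bdd_above (range (\<lambda>q. Xnorm (max q 1) (F q)))"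

definition X_family_rel :: "(ennreal \<Rightarrow> real \<Rightarrow> real) \<Rightarrow> (ennreal \<Rightarrow> real \<Rightarrow> real) \<Rightarrow> bool" where
  "X_family_rel F G \<longleftrightarrow> bounded_X_family F \<and> bounded_X_family G \<and> (\<forall>q. AE x in lborel. F q x = G q x)"

definition X_family_norm :: "(ennreal \<Rightarrow> real \<Rightarrow> real) \<Rightarrow> real" where
  "X_family_norm F = (SUP q. Xnorm (max q 1) (F q))"

lemma one_le_max_one: "1 \<le> max q (1::ennreal)"
  by simp

lemma bounded_X_familyI:
  assumes "\<And>q. F q \<in> XSp (max q 1)" "\<And>q. Xnorm (max q 1) (F q) \<le> B"
  shows "bounded_X_family F"
  using assms unfolding bounded_X_family_def by (auto intro!: bdd_aboveI[of _ B])

lemma bounded_X_family_XSp: "bounded_X_family F \<Longrightarrow> F q \<in> XSp (max q 1)"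
  by (simp add: bounded_X_family_def)

lemma X_family_norm_ge: "bounded_X_family F \<Longrightarrow> Xnorm (max q 1) (F q) \<le> X_family_norm F"
  unfolding X_family_norm_def bounded_X_family_def by (intro cSUP_upper) auto

lemma X_family_norm_le: "(\<And>q. Xnorm (max q 1) (F q) \<le> B) \<Longrightarrow> X_family_norm F \<le> B"
  unfolding X_family_norm_def by (intro cSUP_least) auto

lemma X_family_norm_nonneg: "bounded_X_family F \<Longrightarrow> 0 \<le> X_family_norm F"
  using X_family_norm_ge[of F 0] Xnorm_nonneg[of "max 0 1" "F 0"] by linarith

lemma bounded_X_family_zero: "bounded_X_family (\<lambda>q x. 0)"
  by (rule bounded_X_familyI[of _ 0]) (auto simp: XSp_zero Xnorm_zero)

lemma bounded_X_family_add:
  assumes F: "bounded_X_family F" and G: "bounded_X_family G"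
  shows "bounded_X_family (\<lambda>q x. F q x + G q x)"
    "X_family_norm (\<lambda>q x. F q x + G q x) \<le> X_family_norm F + X_family_norm G"
proof -
  have "Xnorm (max q 1) (\<lambda>x. F q x + G q x) \<le> X_family_norm F + X_family_norm G" for q
    using XSp_add(2)[OF one_le_max_one bounded_X_family_XSp[OF F, of q] bounded_X_family_XSp[OF G, of q]]
      X_family_norm_ge[OF F, of q] X_family_norm_ge[OF G, of q] by linarith
  then show "bounded_X_family (\<lambda>q x. F q x + G q x)"
    "X_family_norm (\<lambda>q x. F q x + G q x) \<le> X_family_norm F + X_family_norm G"
    by (auto intro!: bounded_X_familyI X_family_norm_le
        XSp_add(1)[OF one_le_max_one bounded_X_family_XSp[OF F] bounded_X_family_XSp[OF G]])
qed

lemma bounded_X_family_scale: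
  assumes F: "bounded_X_family F"
  shows "bounded_X_family (\<lambda>q x. c * F q x)" "X_family_norm (\<lambda>q x. c * F q x) = \<bar>c\<bar> * X_family_norm F"
proof -
  have le: "X_family_norm (\<lambda>q x. c * G q x) \<le> \<bar>c\<bar> * X_family_norm G"
    "bounded_X_family (\<lambda>q x. c * G q x)" if G: "bounded_X_family G" for G c
  proof -
    have "Xnorm (max q 1) (\<lambda>x. c * G q x) \<le> \<bar>c\<bar> * X_family_norm G" for q
      using XSp_scale(2)[OF one_le_max_one bounded_X_family_XSp[OF G, of q], of c] X_family_norm_ge[OF G, of q]
      by (simp add: mult_left_mono)
    then show "X_family_norm (\<lambda>q x. c * G q x) \<le> \<bar>c\<bar> * X_family_norm G"
      "bounded_X_family (\<lambda>q x. c * G q x)"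
      by (auto intro!: bounded_X_familyI X_family_norm_le
          XSp_scale(1)[OF one_le_max_one bounded_X_family_XSp[OF G]])
  qed
  show "bounded_X_family (\<lambda>q x. c * F q x)" by (rule le(2)[OF F])
  show "X_family_norm (\<lambda>q x. c * F q x) = \<bar>c\<bar> * X_family_norm F"
  proof (cases "c = 0")
    case True
    then show ?thesis using le(1)[OF F, of 0] X_family_norm_nonneg[OF le(2)[OF F, of 0]] by simp
  next
    case False
    have "X_family_norm F = X_family_norm (\<lambda>q x. (1 / c) * (c * F q x))" using False by simp
    also have "\<dots> \<le> \<bar>1 / c\<bar> * X_family_norm (\<lambda>q x. c * F q x)" by (rule le(1)[OF le(2)[OF F]])
    finally show ?thesis using le(1)[OF F, of c] False by (simp add: field_simps)
  qed
qed

lemma bounded_X_family_diff: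
  "bounded_X_family F \<Longrightarrow> bounded_X_family G \<Longrightarrow> bounded_X_family (\<lambda>q x. F q x - G q x)"
  using bounded_X_family_add(1)[OF _ bounded_X_family_scale(1), of F G "-1"] by simp

lemma X_family_norm_eq_0_iff:
  assumes F: "bounded_X_family F"
  shows "X_family_norm F = 0 \<longleftrightarrow> (\<forall>q. AE x in lborel. F q x = 0)"
proof
  assume "X_family_norm F = 0"
  then have "Xnorm (max q 1) (F q) = 0" for q
    using X_family_norm_ge[OF F, of q] Xnorm_nonneg[of "max q 1" "F q"] by linarith
  then show "\<forall>q. AE x in lborel. F q x = 0"
    using AE_zero_of_Xnorm_zero bounded_X_family_XSp[OF F] by blast
next
  assume "\<forall>q. AE x in lborel. F q x = 0"
  then have "Xnorm (max q 1) (F q) = Xnorm (max q 1) (\<lambda>x. 0)" for q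
    using bounded_X_family_XSp[OF F, of q] by (intro Xnorm_cong_AE) (auto simp: XSp_def)
  then have "X_family_norm F \<le> 0" by (intro X_family_norm_le) (simp add: Xnorm_zero)
  then show "X_family_norm F = 0" using X_family_norm_nonneg[OF F] by linarith
qed

lemma X_family_norm_cong: "X_family_rel F G \<Longrightarrow> X_family_norm F = X_family_norm G"
  unfolding X_family_norm_def X_family_rel_def
  by (intro SUP_cong refl Xnorm_cong_AE) (auto simp: bounded_X_family_def XSp_def)

lemma X_family_rel_part_equivp: "part_equivp X_family_rel"
proof (rule part_equivpI)
  show "\<exists>x. X_family_rel x x" using bounded_X_family_zero by (auto simp: X_family_rel_def)
  show "symp X_family_rel"
  proof (rule sympI, unfold X_family_rel_def, safe)
    fix F G q
    assume "\<forall>q. AE x in lborel. F q x = G q x"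
    then have "AE x in lborel. F q x = G q x" by blast
    then show "AE x in lborel. G q x = F q x" by eventually_elim simp
  qed
  show "transp X_family_rel"
  proof (rule transpI, unfold X_family_rel_def, safe)
    fix F G H q
    assume "\<forall>q. AE x in lborel. F q x = G q x" "\<forall>q. AE x in lborel. G q x = H q x"
    then have "AE x in lborel. F q x = G q x" "AE x in lborel. G q x = H q x" by blast+
    then show "AE x in lborel. F q x = H q x" by eventually_elim simp
  qed
qed

quotient_type xfamily = "ennreal \<Rightarrow> real \<Rightarrow> real" / partial: X_family_rel
  by (rule X_family_rel_part_equivp)

lemma AE_eq_comp2:
  assumes "AE x in M. a x = a' x" "AE x in M. b x = b' x"
  shows "AE x in M. h (a x) (b x) = h (a' x) (b' x)"
  using assms by eventually_elim simp

instantiation xfamily :: real_normed_vector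
begin

lift_definition zero_xfamily :: xfamily is "\<lambda>q x. 0"
  by (simp add: X_family_rel_def bounded_X_family_zero)

lift_definition plus_xfamily :: "xfamily \<Rightarrow> xfamily \<Rightarrow> xfamily" is "\<lambda>F G q x. F q x + G q x"
  unfolding X_family_rel_def by (auto intro!: bounded_X_family_add AE_eq_comp2[where h="(+)"])

lift_definition uminus_xfamily :: "xfamily \<Rightarrow> xfamily" is "\<lambda>F q x. - F q x"
  unfolding X_family_rel_def
  by (auto intro!: bounded_X_family_scale(1)[where c="-1", simplified] AE_eq_comp2[where h="\<lambda>a b. - a"])

lift_definition minus_xfamily :: "xfamily \<Rightarrow> xfamily \<Rightarrow> xfamily" is "\<lambda>F G q x. F q x - G q x"
  unfolding X_family_rel_def by (auto intro!: bounded_X_family_diff AE_eq_comp2[where h="(-)"])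

lift_definition scaleR_xfamily :: "real \<Rightarrow> xfamily \<Rightarrow> xfamily" is "\<lambda>c F q x. c * F q x"
  unfolding X_family_rel_def
  by (auto intro!: bounded_X_family_scale(1) AE_eq_comp2[where h="\<lambda>a b. c * a" for c])

lift_definition norm_xfamily :: "xfamily \<Rightarrow> real" is X_family_norm
  by (rule X_family_norm_cong)

definition dist_xfamily :: "xfamily \<Rightarrow> xfamily \<Rightarrow> real" where
  "dist_xfamily x y = norm (x - y)"

definition sgn_xfamily :: "xfamily \<Rightarrow> xfamily" where
  "sgn_xfamily x = scaleR (inverse (norm x)) x"

definition uniformity_xfamily :: "(xfamily \<times> xfamily) filter" where
  "uniformity_xfamily = (INF e\<in>{0<..}. principal {(x, y). dist x y < e})"

definition open_xfamily :: "xfamily set \<Rightarrow> bool" where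
  "open_xfamily U = (\<forall>x\<in>U. eventually (\<lambda>(x', y). x' = x \<longrightarrow> y \<in> U) uniformity)"

instance
proof
  have rel: "X_family_rel F F \<longleftrightarrow> bounded_X_family F" for F
    by (auto simp: X_family_rel_def)
  have rep: "\<exists>F. bounded_X_family F \<and> X = abs_xfamily F" for X :: xfamily
    using Quotient3_abs_rep[OF Quotient3_xfamily, of X] Quotient3_rep_reflp[OF Quotient3_xfamily, of X] rel
    by metis
  note simps = rel bounded_X_family_add bounded_X_family_scale bounded_X_family_diff bounded_X_family_zero
    plus_xfamily.abs_eq scaleR_xfamily.abs_eq uminus_xfamily.abs_eq minus_xfamily.abs_eq
    zero_xfamily.abs_eq norm_xfamily.abs_eq
  fix a b c :: xfamily and r s :: real
  obtain A B C where A: "bounded_X_family A" "a = abs_xfamily A"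
    and B: "bounded_X_family B" "b = abs_xfamily B" and C: "bounded_X_family C" "c = abs_xfamily C"
    using rep by meson
  have uminus: "bounded_X_family (\<lambda>q x. - A q x)"
    using bounded_X_family_scale(1)[OF A(1), of "-1"] by simp
  show "a + b + c = a + (b + c)" using A B C by (simp add: simps add.assoc)
  show "a + b = b + a" using A B by (simp add: simps add.commute)
  show "0 + a = a" using A by (simp add: simps)
  show "- a + a = 0" using A uminus by (simp add: simps)
  show "a - b = a + - b" using A B by (simp add: simps bounded_X_family_scale(1)[OF B(1), of "-1", simplified])
  show "r *\<^sub>R (a + b) = r *\<^sub>R a + r *\<^sub>R b" using A B by (simp add: simps algebra_simps)
  show "(r + s) *\<^sub>R a = r *\<^sub>R a + s *\<^sub>R a" using A by (simp add: simps algebra_simps)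
  show "r *\<^sub>R s *\<^sub>R a = (r * s) *\<^sub>R a" using A by (simp add: simps algebra_simps)
  show "1 *\<^sub>R a = a" using A by (simp add: simps)
  show "dist a b = norm (a - b)" by (simp add: dist_xfamily_def)
  show "sgn a = inverse (norm a) *\<^sub>R a" by (simp add: sgn_xfamily_def)
  show "(uniformity :: (xfamily \<times> xfamily) filter) = (INF e\<in>{0<..}. principal {(x, y). dist x y < e})"
    by (simp add: uniformity_xfamily_def)
  show "open U = (\<forall>x\<in>U. eventually (\<lambda>(x', y). x' = x \<longrightarrow> y \<in> U) uniformity)" for U :: "xfamily set"
    by (simp add: open_xfamily_def)
  have "a = 0 \<longleftrightarrow> (\<forall>q. AE x in lborel. A q x = 0)"
    using A Quotient3_rel[OF Quotient3_xfamily, of A "\<lambda>q x. 0"] bounded_X_family_zero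
    by (simp add: zero_xfamily.abs_eq rel X_family_rel_def)
  then show "norm a = 0 \<longleftrightarrow> a = 0" using A by (simp add: simps X_family_norm_eq_0_iff)
  show "norm (a + b) \<le> norm a + norm b" using A B by (simp add: simps)
  show "norm (r *\<^sub>R a) = \<bar>r\<bar> * norm a" using A by (simp add: simps)
qed

end

lemma bounded_X_family_rep: "bounded_X_family (rep_xfamily X)"
  using Quotient3_rep_reflp[OF Quotient3_xfamily, of X] by (simp add: X_family_rel_def)

lemma abs_rep_xfamily [simp]: "abs_xfamily (rep_xfamily X) = X"
  by (rule Quotient3_abs_rep[OF Quotient3_xfamily])

lemma AE_rep_abs_xfamily:
  "bounded_X_family F \<Longrightarrow> AE x in lborel. rep_xfamily (abs_xfamily F) q x = F q x"
  using Quotient3_rep_abs[OF Quotient3_xfamily, of F] by (simp add: X_family_rel_def)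

lemma abs_xfamily_eq_iff:
  "bounded_X_family F \<Longrightarrow> bounded_X_family G \<Longrightarrow>
     abs_xfamily F = abs_xfamily G \<longleftrightarrow> (\<forall>q. AE x in lborel. F q x = G q x)"
  using Quotient3_rel[OF Quotient3_xfamily, of F G] by (auto simp: X_family_rel_def)

lemma norm_abs_xfamily: "bounded_X_family F \<Longrightarrow> norm (abs_xfamily F) = X_family_norm F"
  by (simp add: norm_xfamily.abs_eq X_family_rel_def)

lemma minus_abs_xfamily:
  "bounded_X_family F \<Longrightarrow> bounded_X_family G \<Longrightarrow>
     abs_xfamily F - abs_xfamily G = abs_xfamily (\<lambda>q x. F q x - G q x)"
  by (simp add: minus_xfamily.abs_eq X_family_rel_def)

lemma scaleR_abs_xfamily:
  "bounded_X_family F \<Longrightarrow> c *\<^sub>R abs_xfamily F = abs_xfamily (\<lambda>q x. c * F q x)"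
  by (simp add: scaleR_xfamily.abs_eq X_family_rel_def)

instance xfamily :: banach
proof
  fix X :: "nat \<Rightarrow> xfamily"
  assume Cauchy: "Cauchy X"
  define F where "F n = rep_xfamily (X n)" for n
  have F: "bounded_X_family (F n)" "X n = abs_xfamily (F n)" for n
    by (simp_all add: F_def bounded_X_family_rep)
  have dist_X: "dist (X n) (abs_xfamily H) = X_family_norm (\<lambda>q x. F n q x - H q x)"
    if "bounded_X_family H" for n H
    using that by (simp add: dist_norm F minus_abs_xfamily norm_abs_xfamily bounded_X_family_diff)
  have component_Cauchy: "Xnorm (max q 1) (\<lambda>x. F n q x - F m q x) < \<epsilon>"
    if "\<forall>n\<ge>N. \<forall>m\<ge>N. dist (X n) (X m) < \<epsilon>" "N \<le> n" "N \<le> m" for N n m q \<epsilon>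
  proof -
    have "dist (X n) (X m) < \<epsilon>" using that by blast
    then have "dist (X n) (abs_xfamily (F m)) < \<epsilon>" by (simp only: F(2)[of m])
    then show ?thesis
      using X_family_norm_ge[OF bounded_X_family_diff[OF F(1)[of n] F(1)[of m]], of q]
      unfolding dist_X[OF F(1)] by linarith
  qed
  define G where "G q x = lim (\<lambda>n. F n q x)" for q x
  have G_lim: "AE x in lborel. (\<lambda>n. F n q x) \<longlonglongrightarrow> G q x" for q
  proof -
    have "AE x in lborel. convergent (\<lambda>n. F n q x)"
      using metric_CauchyD[OF Cauchy] component_Cauchy
      by (intro AE_convergent_of_Xnorm_Cauchy[OF one_le_max_one bounded_X_family_XSp[OF F(1)]]) meson
    then show ?thesis by (auto simp: G_def convergent_LIMSEQ_iff elim!: eventually_mono)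
  qed
  have [measurable]: "F n q \<in> borel_measurable borel" for n q
    using XSp_measurable[OF bounded_X_family_XSp[OF F(1)]] by simp
  have G_meas: "G q \<in> borel_measurable lborel" for q
    unfolding G_def by measurable
  have tail: "\<exists>N. \<forall>n\<ge>N. \<forall>q. (\<lambda>x. F n q x - G q x) \<in> XSp (max q 1)
      \<and> Xnorm (max q 1) (\<lambda>x. F n q x - G q x) \<le> 2 * \<epsilon>" if eps: "\<epsilon> > 0" for \<epsilon>
  proof -
    obtain N where N: "\<forall>n\<ge>N. \<forall>m\<ge>N. dist (X n) (X m) < \<epsilon>"
      using metric_CauchyD[OF Cauchy eps] by blast
    show ?thesis
      using Xnorm_diff_limit_le[OF one_le_max_one bounded_X_family_XSp[OF F(1)] G_meas G_lim]
        component_Cauchy[OF N] by (meson less_imp_le)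
  qed
  have G: "bounded_X_family G"
  proof -
    obtain N where N: "\<And>q. (\<lambda>x. F N q x - G q x) \<in> XSp (max q 1)"
      "\<And>q. Xnorm (max q 1) (\<lambda>x. F N q x - G q x) \<le> 2"
      using tail[of 1] by auto
    have G_XSp: "G q \<in> XSp (max q 1)" for q
      using XSp_diff[OF one_le_max_one bounded_X_family_XSp[OF F(1)[of N], of q] N(1)[of q]] by simp
    have "Xnorm (max q 1) (G q) \<le> X_family_norm (F N) + 2" for q
      using Xnorm_diff_triangle[OF one_le_max_one G_XSp[of q] bounded_X_family_XSp[OF F(1)[of N], of q] XSp_zero]
        Xnorm_diff_commute[OF one_le_max_one G_XSp[of q] bounded_X_family_XSp[OF F(1)[of N], of q]]
        N(2)[of q] X_family_norm_ge[OF F(1)[of N], of q] by simp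
    then show ?thesis using G_XSp by (rule bounded_X_familyI[rotated])
  qed
  have "X \<longlonglongrightarrow> abs_xfamily G"
  proof (rule metric_LIMSEQ_I)
    fix \<epsilon> :: real
    assume "\<epsilon> > 0"
    then obtain N where N: "\<forall>n\<ge>N. \<forall>q. Xnorm (max q 1) (\<lambda>x. F n q x - G q x) \<le> 2 * (\<epsilon> / 4)"
      using tail[of "\<epsilon> / 4"] by auto
    have "dist (X n) (abs_xfamily G) < \<epsilon>" if "N \<le> n" for n
      using X_family_norm_le[of "\<lambda>q x. F n q x - G q x"] N that \<open>\<epsilon> > 0\<close>
      unfolding dist_X[OF G] by fastforce
    then show "\<exists>N. \<forall>n\<ge>N. dist (X n) (abs_xfamily G) < \<epsilon>" by blast
  qed
  then show "convergent X" by (auto simp: convergent_def)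
qed

definition X_embed :: "ennreal \<Rightarrow> (real \<Rightarrow> real) \<Rightarrow> xfamily" where
  "X_embed p v = abs_xfamily (\<lambda>q. if q = p then v else (\<lambda>x. 0))"

definition X_component :: "ennreal \<Rightarrow> xfamily \<Rightarrow> real \<Rightarrow> real" where
  "X_component p X = rep_xfamily X p"

lemma bounded_X_family_embed:
  assumes p: "1 \<le> p" and v: "v \<in> XSp p"
  shows "bounded_X_family (\<lambda>q. if q = p then v else (\<lambda>x. 0))"
  by (rule bounded_X_familyI[where B="Xnorm p v"])
    (use p v in \<open>auto simp: max_absorb1 XSp_zero Xnorm_zero Xnorm_nonneg\<close>)

lemma norm_X_embed:
  assumes p: "1 \<le> p" and v: "v \<in> XSp p"
  shows "norm (X_embed p v) = Xnorm p v"
proof -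
  have "X_family_norm (\<lambda>q. if q = p then v else (\<lambda>x. 0)) = Xnorm p v"
  proof (rule antisym)
    show "X_family_norm (\<lambda>q. if q = p then v else (\<lambda>x. 0)) \<le> Xnorm p v"
      using p by (intro X_family_norm_le) (auto simp: max_absorb1 Xnorm_zero Xnorm_nonneg)
    show "Xnorm p v \<le> X_family_norm (\<lambda>q. if q = p then v else (\<lambda>x. 0))"
      using X_family_norm_ge[OF bounded_X_family_embed[OF p v], of p] p by (simp add: max_absorb1)
  qed
  then show ?thesis by (simp add: X_embed_def norm_abs_xfamily[OF bounded_X_family_embed[OF p v]])
qed

lemma X_embed_diff:
  assumes p: "1 \<le> p" and u: "u \<in> XSp p" and v: "v \<in> XSp p"
  shows "X_embed p u - X_embed p v = X_embed p (\<lambda>x. u x - v x)"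
proof -
  have "(\<lambda>q x. (if q = p then u else (\<lambda>x. 0)) x - (if q = p then v else (\<lambda>x. 0)) x)
      = (\<lambda>q. if q = p then (\<lambda>x. u x - v x) else (\<lambda>x. 0))"
    by (auto simp: fun_eq_iff)
  then show ?thesis
    by (simp add: X_embed_def minus_abs_xfamily[OF bounded_X_family_embed[OF p u] bounded_X_family_embed[OF p v]])
qed

lemma X_embed_scaleR:
  assumes p: "1 \<le> p" and u: "u \<in> XSp p"
  shows "c *\<^sub>R X_embed p u = X_embed p (\<lambda>x. c * u x)"
proof -
  have "(\<lambda>q x. c * (if q = p then u else (\<lambda>x. 0)) x) = (\<lambda>q. if q = p then (\<lambda>x. c * u x) else (\<lambda>x. 0))"
    by (auto simp: fun_eq_iff)
  then show ?thesis by (simp add: X_embed_def scaleR_abs_xfamily[OF bounded_X_family_embed[OF p u]])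
qed

lemma X_embed_eq_iff:
  assumes p: "1 \<le> p" and u: "u \<in> XSp p" and v: "v \<in> XSp p"
  shows "X_embed p u = X_embed p v \<longleftrightarrow> (AE x in lborel. u x = v x)"
  unfolding X_embed_def abs_xfamily_eq_iff[OF bounded_X_family_embed[OF p u] bounded_X_family_embed[OF p v]]
proof
  assume "\<forall>q. AE x in lborel. (if q = p then u else (\<lambda>x. 0)) x = (if q = p then v else (\<lambda>x. 0)) x"
  then have "AE x in lborel. (if p = p then u else (\<lambda>x. 0)) x = (if p = p then v else (\<lambda>x. 0)) x" ..
  then show "AE x in lborel. u x = v x" by simp
next
  assume uv: "AE x in lborel. u x = v x"
  show "\<forall>q. AE x in lborel. (if q = p then u else (\<lambda>x. 0)) x = (if q = p then v else (\<lambda>x. 0)) x"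
    using uv by auto
qed

lemma X_component_XSp: "1 \<le> p \<Longrightarrow> X_component p X \<in> XSp p"
  using bounded_X_family_XSp[OF bounded_X_family_rep[of X], of p] by (simp add: X_component_def max_absorb1)

lemma X_component_measurable [measurable]: "1 \<le> p \<Longrightarrow> X_component p X \<in> borel_measurable borel"
  using X_component_XSp[of p X] by (simp add: XSp_def)

lemma AE_X_component_embed: "1 \<le> p \<Longrightarrow> v \<in> XSp p \<Longrightarrow> AE x in lborel. X_component p (X_embed p v) x = v x"
  using AE_rep_abs_xfamily[OF bounded_X_family_embed, of p v p] by (simp add: X_component_def X_embed_def)

lemma AE_X_component_diff: "AE x in lborel. X_component p (X - Y) x = X_component p X x - X_component p Y x"
  using AE_rep_abs_xfamily[OF bounded_X_family_diff[OF bounded_X_family_rep bounded_X_family_rep], of X Y p]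
  by (simp add: X_component_def minus_abs_xfamily[OF bounded_X_family_rep bounded_X_family_rep, symmetric])

lemma AE_X_component_scaleR: "AE x in lborel. X_component p (c *\<^sub>R X) x = c * X_component p X x"
  using AE_rep_abs_xfamily[OF bounded_X_family_scale(1)[OF bounded_X_family_rep], of c X p]
  by (simp add: X_component_def scaleR_abs_xfamily[OF bounded_X_family_rep, symmetric])

lemma Xnorm_X_component_le: "1 \<le> p \<Longrightarrow> Xnorm p (X_component p X) \<le> norm X"
  using X_family_norm_ge[OF bounded_X_family_rep[of X], of p] norm_abs_xfamily[OF bounded_X_family_rep[of X]]
  by (simp add: X_component_def max_absorb1)

lemma Xnorm_X_component_diff_le:
  assumes p: "1 \<le> p"
  shows "Xnorm p (\<lambda>x. X_component p X x - X_component p Y x) \<le> norm (X - Y)"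
proof -
  have "Xnorm p (\<lambda>x. X_component p X x - X_component p Y x) = Xnorm p (X_component p (X - Y))"
    using AE_X_component_diff[of p X Y] p
    by (intro Xnorm_cong_AE) (auto elim!: eventually_mono)
  also have "\<dots> \<le> norm (X - Y)" by (rule Xnorm_X_component_le[OF p])
  finally show ?thesis .
qed

lemma has_vector_derivative_iff_quotient:
  fixes U :: "real \<Rightarrow> 'a::real_normed_vector"
  shows "(U has_vector_derivative U') (at t within S) \<longleftrightarrow>
    ((\<lambda>s. norm ((U s - U t) /\<^sub>R (s - t) - U')) \<longlongrightarrow> 0) (at t within S)"
proof -
  have "\<forall>\<^sub>F s in at t within S. norm ((1 / norm (s - t)) *\<^sub>R (U s - (U t + (s - t) *\<^sub>R U')))
      = norm ((U s - U t) /\<^sub>R (s - t) - U')"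
    unfolding eventually_at_filter
  proof (rule always_eventually, intro allI impI)
    fix s
    assume "s \<noteq> t"
    have "(1 / (s - t)) *\<^sub>R (U s - (U t + (s - t) *\<^sub>R U'))
        = (1 / (s - t)) *\<^sub>R (U s - U t) - ((1 / (s - t)) * (s - t)) *\<^sub>R U'"
      by (simp add: scaleR_diff_right scaleR_add_right)
    then have "(U s - U t) /\<^sub>R (s - t) - U' = (1 / (s - t)) *\<^sub>R (U s - (U t + (s - t) *\<^sub>R U'))"
      using \<open>s \<noteq> t\<close> by (simp add: divide_inverse)
    then show "norm ((1 / norm (s - t)) *\<^sub>R (U s - (U t + (s - t) *\<^sub>R U'))) = norm ((U s - U t) /\<^sub>R (s - t) - U')"
      by simp
  qed
  note quotient_eq = this
  have "(U has_vector_derivative U') (at t within S) \<longleftrightarrow>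
      ((\<lambda>s. (1 / norm (s - t)) *\<^sub>R (U s - (U t + (s - t) *\<^sub>R U'))) \<longlongrightarrow> 0) (at t within S)"
    unfolding has_vector_derivative_def has_derivative_within by (simp add: bounded_linear_scaleR_left)
  also have "\<dots> \<longleftrightarrow> ((\<lambda>s. norm ((1 / norm (s - t)) *\<^sub>R (U s - (U t + (s - t) *\<^sub>R U')))) \<longlongrightarrow> 0) (at t within S)"
    by (rule tendsto_norm_zero_iff[symmetric])
  also have "\<dots> \<longleftrightarrow> ((\<lambda>s. norm ((U s - U t) /\<^sub>R (s - t) - U')) \<longlongrightarrow> 0) (at t within S)"
    by (rule tendsto_cong[OF quotient_eq])
  finally show ?thesis .
qed

lemma X_has_derivative_components:
  assumes p: "1 \<le> p"
    and deriv: "\<And>t. t \<in> {0..T} \<Longrightarrow> (U has_vector_derivative U' t) (at t within {0..T})"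
  shows "X_has_derivative p T (\<lambda>t. X_component p (U t)) (\<lambda>t. X_component p (U' t))"
  unfolding X_has_derivative_def
proof (intro ballI conjI X_component_XSp[OF p])
  fix t
  assume t: "t \<in> {0..T}"
  have le: "Xnorm p (\<lambda>x. (X_component p (U s) x - X_component p (U t) x) / (s - t) - X_component p (U' t) x)
      \<le> norm ((U s - U t) /\<^sub>R (s - t) - U' t)" for s
  proof -
    let ?Q = "(U s - U t) /\<^sub>R (s - t)"
    have "AE x in lborel. X_component p (?Q - U' t) x
        = inverse (s - t) * (X_component p (U s) x - X_component p (U t) x) - X_component p (U' t) x"
      using AE_X_component_diff[of p ?Q "U' t"] AE_X_component_scaleR[of p "inverse (s - t)" "U s - U t"]
        AE_X_component_diff[of p "U s" "U t"]
      by eventually_elim simp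
    then have "Xnorm p (\<lambda>x. (X_component p (U s) x - X_component p (U t) x) / (s - t) - X_component p (U' t) x)
        = Xnorm p (X_component p (?Q - U' t))"
      using p by (intro Xnorm_cong_AE) (auto simp: divide_inverse mult.commute elim!: eventually_mono)
    then show ?thesis using Xnorm_X_component_le[OF p, of "?Q - U' t"] by simp
  qed
  have lim: "((\<lambda>s. norm ((U s - U t) /\<^sub>R (s - t) - U' t)) \<longlongrightarrow> 0) (at t within {0..T})"
    using deriv[OF t] by (simp only: has_vector_derivative_iff_quotient)
  show "((\<lambda>s. Xnorm p (\<lambda>x. (X_component p (U s) x - X_component p (U t) x) / (s - t)
      - X_component p (U' t) x)) \<longlongrightarrow> 0) (at t within {0..T})"
    by (rule tendsto_sandwich[OF _ _ tendsto_const lim]) (simp_all add: Xnorm_nonneg le)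
qed

lemma X_continuous_components:
  assumes p: "1 \<le> p" and W: "continuous_on {0..T} W"
  shows "X_continuous p T (\<lambda>t. X_component p (W t))"
  unfolding X_continuous_def
proof (intro ballI conjI X_component_XSp[OF p])
  fix t
  assume "t \<in> {0..T}"
  then have "(W \<longlongrightarrow> W t) (at t within {0..T})" using W by (simp add: continuous_on_def)
  then have lim: "((\<lambda>s. norm (W s - W t)) \<longlongrightarrow> 0) (at t within {0..T})"
    by (intro tendsto_norm_zero LIM_zero)
  show "((\<lambda>s. Xnorm p (\<lambda>x. X_component p (W s) x - X_component p (W t) x)) \<longlongrightarrow> 0) (at t within {0..T})"
    by (rule tendsto_sandwich[OF _ _ tendsto_const lim])
      (simp_all add: Xnorm_nonneg Xnorm_X_component_diff_le[OF p])
qed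

lemma has_vector_derivative_X_embed:
  assumes p: "1 \<le> p" and u: "X_has_derivative p T u v" and t: "t \<in> {0..T}"
  shows "((\<lambda>s. X_embed p (u s)) has_vector_derivative X_embed p (v t)) (at t within {0..T})"
proof -
  have uv: "u s \<in> XSp p" "v s \<in> XSp p" if "s \<in> {0..T}" for s
    using u that by (auto simp: X_has_derivative_def)
  have "norm ((X_embed p (u s) - X_embed p (u t)) /\<^sub>R (s - t) - X_embed p (v t))
      = Xnorm p (\<lambda>x. (u s x - u t x) / (s - t) - v t x)" if "s \<in> {0..T}" for s
  proof -
    have d: "(\<lambda>x. u s x - u t x) \<in> XSp p" by (rule XSp_diff[OF p uv(1)[OF that] uv(1)[OF t]])
    have q: "(\<lambda>x. inverse (s - t) * (u s x - u t x)) \<in> XSp p" by (rule XSp_scale(1)[OF p d])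
    have "(X_embed p (u s) - X_embed p (u t)) /\<^sub>R (s - t) - X_embed p (v t)
        = X_embed p (\<lambda>x. inverse (s - t) * (u s x - u t x) - v t x)"
      by (simp only: X_embed_diff[OF p uv(1)[OF that] uv(1)[OF t]] X_embed_scaleR[OF p d]
          X_embed_diff[OF p q uv(2)[OF t]])
    then show ?thesis
      using norm_X_embed[OF p XSp_diff[OF p q uv(2)[OF t]]] by (simp add: divide_inverse_commute)
  qed
  then have "\<forall>\<^sub>F s in at t within {0..T}. Xnorm p (\<lambda>x. (u s x - u t x) / (s - t) - v t x)
      = norm ((X_embed p (u s) - X_embed p (u t)) /\<^sub>R (s - t) - X_embed p (v t))"
    unfolding eventually_at_filter by (intro always_eventually) auto
  moreover have "((\<lambda>s. Xnorm p (\<lambda>x. (u s x - u t x) / (s - t) - v t x)) \<longlongrightarrow> 0) (at t within {0..T})"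
    using u t by (simp add: X_has_derivative_def)
  ultimately show ?thesis
    unfolding has_vector_derivative_iff_quotient by (rule iffD1[OF tendsto_cong])
qed

section \<open>Local well-posedness of Lipschitz initial value problems\<close>

text \<open>As in \<open>is_solution\<close>, the equation is imposed on \<open>(0, T]\<close> only.\<close>

definition ivp_solution :: "('a::real_normed_vector \<Rightarrow> 'a) \<Rightarrow> real \<Rightarrow> 'a \<Rightarrow> (real \<Rightarrow> 'a) \<Rightarrow> bool" where
  "ivp_solution G T z0 z \<longleftrightarrow> z 0 = z0 \<and> (\<exists>z'. (\<forall>t\<in>{0..T}. (z has_vector_derivative z' t) (at t within {0..T}))
      \<and> (\<forall>t\<in>{0<..T}. z' t = G (z t)))"

lemma ivp_solution_continuous: "ivp_solution G T z0 z \<Longrightarrow> continuous_on {0..T} z"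
  unfolding ivp_solution_def by (auto intro: continuous_on_vector_derivative)

lemma ivp_solution_has_integral:
  fixes z :: "real \<Rightarrow> 'a::banach"
  assumes "ivp_solution G T z0 z" "0 \<le> t" "t \<le> T"
  shows "((\<lambda>s. G (z s)) has_integral (z t - z0)) {0..t}"
proof -
  obtain z' where z0: "z 0 = z0"
    and z': "\<And>s. s \<in> {0..T} \<Longrightarrow> (z has_vector_derivative z' s) (at s within {0..T})"
    and eq: "\<And>s. s \<in> {0<..T} \<Longrightarrow> z' s = G (z s)"
    using assms(1) unfolding ivp_solution_def by blast
  have "(z' has_integral (z t - z 0)) {0..t}"
    using assms(2,3)
    by (intro fundamental_theorem_of_calculus) (auto intro: has_vector_derivative_within_subset[OF z'])
  from has_integral_spike_finite[where S="{0}", OF _ _ this]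
  show ?thesis using eq assms(3) z0 by auto
qed

lemma ivp_solution_norm_less:
  fixes z :: "real \<Rightarrow> 'a::banach"
  assumes sol: "ivp_solution G T z0 z" and M: "0 \<le> M" and GM: "\<And>x. norm x \<le> R \<Longrightarrow> norm (G x) \<le> M"
    and small: "norm z0 + T * M < R" and t: "t \<in> {0..T}"
  shows "norm (z t) < R"
proof (rule ccontr)
  assume "\<not> norm (z t) < R"
  have cont: "continuous_on {0..t} (\<lambda>s. norm (z s))"
    using t by (intro continuous_on_norm continuous_on_subset[OF ivp_solution_continuous[OF sol]]) auto
  have z0: "z 0 = z0" using sol by (simp add: ivp_solution_def)
  have "norm (z 0) < R" using z0 small M t by (smt (verit) mult_nonneg_nonneg atLeastAtMost_iff)
  define A where "A = {s \<in> {0..t}. norm (z s) = R}"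
  have "A \<noteq> {}"
    using IVT'[of "\<lambda>s. norm (z s)" 0 R t] cont \<open>norm (z 0) < R\<close> \<open>\<not> norm (z t) < R\<close> t
    by (auto simp: A_def)
  moreover have "closed A"
    unfolding A_def by (rule continuous_closed_preimage_constant[OF cont]) simp
  moreover have "bounded A" by (rule bounded_subset[of "{0..t}"]) (auto simp: A_def)
  ultimately have "A \<noteq> {}" "compact A" by (auto simp: compact_eq_bounded_closed)
  then obtain s1 where s1: "s1 \<in> A" and first: "\<And>s. s \<in> A \<Longrightarrow> s1 \<le> s"
    using continuous_attains_inf[of A "\<lambda>x. x"] by auto
  have s1t: "0 \<le> s1" "s1 \<le> t" "norm (z s1) = R" using s1 by (auto simp: A_def)
  have below: "norm (z s) \<le> R" if s: "0 \<le> s" "s \<le> s1" for s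
  proof (rule ccontr)
    assume "\<not> norm (z s) \<le> R"
    moreover have "continuous_on {0..s} (\<lambda>s. norm (z s))"
      by (rule continuous_on_subset[OF cont]) (use s s1t in auto)
    ultimately obtain s' where "0 \<le> s'" "s' \<le> s" "norm (z s') = R"
      using IVT'[of "\<lambda>s. norm (z s)" 0 R s] \<open>norm (z 0) < R\<close> s by auto
    then have "s' \<in> A" using s s1t by (auto simp: A_def)
    then have "s = s1" using first[of s'] \<open>s' \<le> s\<close> s by auto
    then show False using \<open>\<not> norm (z s) \<le> R\<close> s1t by simp
  qed
  have integral: "((\<lambda>s. G (z s)) has_integral (z s1 - z0)) {0..s1}"
    by (rule ivp_solution_has_integral[OF sol s1t(1)]) (use s1t t in auto)
  have bound: "norm (G (z s)) \<le> M" if "s \<in> {0..s1} - {}" for s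
    using below GM that by auto
  have "norm (z s1 - z0) \<le> M * s1"
    using has_integral_bound_real[OF M finite.emptyI integral bound] s1t by simp
  also have "\<dots> \<le> T * M" using s1t t M by (simp add: mult.commute mult_left_mono)
  finally show False
    using norm_triangle_ineq2[of "z s1" z0] s1t small by simp
qed

lemma ivp_solution_dist_le:
  fixes z y :: "real \<Rightarrow> 'a::banach"
  assumes sz: "ivp_solution G T z0 z" and sy: "ivp_solution G T y0 y" and T: "0 \<le> T"
    and R: "\<And>t. t \<in> {0..T} \<Longrightarrow> norm (z t) \<le> R \<and> norm (y t) \<le> R"
    and L: "L-lipschitz_on (cball 0 R) G" and TL: "T * L \<le> 1/2" and t: "t \<in> {0..T}"
  shows "norm (z t - y t) \<le> 2 * norm (z0 - y0)"
proof -
  have L0: "0 \<le> L" using L by (simp add: lipschitz_on_def)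
  have cont: "continuous_on {0..T} (\<lambda>t. norm (z t - y t))"
    by (intro continuous_intros ivp_solution_continuous[OF sz] ivp_solution_continuous[OF sy])
  obtain tm where tm: "tm \<in> {0..T}" and max: "\<And>t. t \<in> {0..T} \<Longrightarrow> norm (z t - y t) \<le> norm (z tm - y tm)"
    using continuous_attains_sup[OF compact_Icc _ cont] T by auto
  define D where "D = norm (z tm - y tm)"
  have integral: "((\<lambda>s. G (z s) - G (y s)) has_integral ((z tm - z0) - (y tm - y0))) {0..tm}"
    using ivp_solution_has_integral[OF sz, of tm] ivp_solution_has_integral[OF sy, of tm] tm
    by (intro has_integral_diff) auto
  have bound: "norm (G (z s) - G (y s)) \<le> L * D" if "s \<in> {0..tm} - {}" for s
  proof -
    have sT: "s \<in> {0..T}" using that tm by auto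
    have "norm (G (z s) - G (y s)) \<le> L * norm (z s - y s)"
      using lipschitz_onD[OF L, of "z s" "y s"] R[OF sT] by (simp add: dist_norm)
    also have "\<dots> \<le> L * D" using max[OF sT] L0 by (simp add: D_def mult_left_mono)
    finally show ?thesis .
  qed
  have LD: "0 \<le> L * D" using L0 by (simp add: D_def)
  have "norm ((z tm - z0) - (y tm - y0)) \<le> (L * D) * tm"
    using has_integral_bound_real[OF LD finite.emptyI integral bound] tm by simp
  also have "\<dots> \<le> (T * L) * D"
  proof -
    have "tm * D \<le> T * D" using tm by (intro mult_right_mono) (auto simp: D_def)
    from mult_left_mono[OF this L0] show ?thesis by (simp add: algebra_simps)
  qed
  also have "\<dots> \<le> 1/2 * D" by (rule mult_right_mono[OF TL]) (simp add: D_def)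
  finally have "norm ((z tm - z0) - (y tm - y0)) \<le> 1/2 * D" .
  moreover have "D \<le> norm (z0 - y0) + norm ((z tm - z0) - (y tm - y0))"
    unfolding D_def using norm_triangle_ineq[of "z0 - y0" "(z tm - z0) - (y tm - y0)"] by (simp add: algebra_simps)
  ultimately show ?thesis using max[OF t] by (simp add: D_def)
qed

context
  fixes G :: "'a::banach \<Rightarrow> 'a" and L M R T :: real and z0 :: 'a
  assumes lipschitz: "L-lipschitz_on (cball 0 R) G"
    and bounded: "\<And>x. norm x \<le> R \<Longrightarrow> norm (G x) \<le> M"
    and radius: "norm z0 + 1 \<le> R"
    and time: "0 < T" "T * L \<le> 1/2" "T * M \<le> 1/2"
begin

definition picard_ball :: "(real \<Rightarrow>\<^sub>C 'a) set" where
  "picard_ball = PiC UNIV (\<lambda>_. cball z0 1)"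

text \<open>Clamping the time to \<open>[0, T]\<close> makes the Picard iterates bounded continuous on \<open>\<real>\<close>.\<close>
definition picard_map :: "(real \<Rightarrow>\<^sub>C 'a) \<Rightarrow> (real \<Rightarrow>\<^sub>C 'a)" where
  "picard_map f = Bcontfun (\<lambda>t. z0 + integral {0..max 0 (min T t)} (\<lambda>s. G (f s)))"

lemma mem_picard_ball: "f \<in> picard_ball \<longleftrightarrow> (\<forall>t. dist z0 (f t) \<le> 1)"
  by (auto simp: picard_ball_def mem_PiC_iff)

lemma picard_ball_norm_le:
  assumes "f \<in> picard_ball"
  shows "norm (f t) \<le> R"
proof -
  have "norm (z0 - f t) \<le> 1" using assms by (simp add: mem_picard_ball dist_norm)
  then show ?thesis using norm_triangle_ineq2[of "f t" z0] norm_minus_commute[of z0 "f t"] radius by linarith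
qed

lemma picard_integrand_continuous: "f \<in> picard_ball \<Longrightarrow> continuous_on {0..T} (\<lambda>s. G (f s))"
  by (rule continuous_on_compose2[OF lipschitz_on_continuous_on[OF lipschitz]])
    (auto simp: picard_ball_norm_le)

lemma picard_integrand_integrable:
  "f \<in> picard_ball \<Longrightarrow> 0 \<le> c \<Longrightarrow> c \<le> T \<Longrightarrow> (\<lambda>s. G (f s)) integrable_on {0..c}"
  by (rule integrable_on_subinterval[OF integrable_continuous_real[OF picard_integrand_continuous]]) auto

lemma picard_bound_nonneg: "0 \<le> M"
proof -
  have "0 \<le> R" using radius norm_ge_zero[of z0] by linarith
  then have "norm (0::'a) \<le> R" by simp
  then show ?thesis using bounded[of 0] norm_ge_zero[of "G 0"] by linarith
qed

lemma picard_integral_norm_le: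
  assumes "f \<in> picard_ball"
  shows "norm (integral {0..max 0 (min T t)} (\<lambda>s. G (f s))) \<le> M * T"
proof -
  define c where "c = max 0 (min T t)"
  have c: "0 \<le> c" "c \<le> T" using time(1) by (auto simp: c_def)
  have "norm (G (f s)) \<le> M" if "s \<in> {0..c} - {}" for s
    using bounded picard_ball_norm_le[OF assms] by blast
  from has_integral_bound_real[OF picard_bound_nonneg finite.emptyI
      integrable_integral[OF picard_integrand_integrable[OF assms c]] this]
  have "norm (integral {0..c} (\<lambda>s. G (f s))) \<le> M * c" using c by simp
  also have "\<dots> \<le> M * T" using c picard_bound_nonneg by (intro mult_left_mono)
  finally show ?thesis by (simp add: c_def)
qed

lemma apply_picard_map:
  assumes f: "f \<in> picard_ball"
  shows "apply_bcontfun (picard_map f) t = z0 + integral {0..max 0 (min T t)} (\<lambda>s. G (f s))"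
proof -
  let ?h = "\<lambda>t. z0 + integral {0..max 0 (min T t)} (\<lambda>s. G (f s))"
  have "?h \<in> bcontfun"
  proof (rule bcontfun_normI)
    have "continuous_on UNIV (\<lambda>t. max 0 (min T t))" by (intro continuous_intros)
    then have "continuous_on UNIV (\<lambda>t. integral {0..max 0 (min T t)} (\<lambda>s. G (f s)))"
      using time(1)
      by (intro continuous_on_compose2[OF indefinite_integral_continuous_1[OF
            picard_integrand_integrable[OF f _ order.refl]]]) auto
    then show "continuous_on UNIV ?h" by (intro continuous_intros)
    show "norm (?h t) \<le> norm z0 + M * T" for t
      using picard_integral_norm_le[OF f, of t] norm_triangle_ineq[of z0] by (smt (verit))
  qed
  then show ?thesis by (simp add: picard_map_def Bcontfun_inverse)
qed

lemma picard_map_into: "picard_map ` picard_ball \<subseteq> picard_ball"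
proof (intro image_subsetI)
  fix f
  assume f: "f \<in> picard_ball"
  have "dist z0 (picard_map f t) \<le> 1" for t
    using picard_integral_norm_le[OF f, of t] time(3) by (simp add: apply_picard_map[OF f] dist_norm mult.commute)
  then show "picard_map f \<in> picard_ball" by (simp add: mem_picard_ball)
qed

lemma picard_map_contraction:
  assumes f: "f \<in> picard_ball" and g: "g \<in> picard_ball"
  shows "dist (picard_map f) (picard_map g) \<le> 1/2 * dist f g"
proof (rule dist_bound)
  fix t
  define c where "c = max 0 (min T t)"
  have c: "0 \<le> c" "c \<le> T" using time(1) by (auto simp: c_def)
  have L0: "0 \<le> L" using lipschitz by (simp add: lipschitz_on_def)
  have bound: "norm (G (f s) - G (g s)) \<le> L * dist f g" if "s \<in> {0..c} - {}" for s
  proof -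
    have "norm (G (f s) - G (g s)) \<le> L * dist (f s) (g s)"
      using lipschitz_onD[OF lipschitz, of "f s" "g s"] picard_ball_norm_le[OF f] picard_ball_norm_le[OF g]
      by (simp add: dist_norm)
    also have "\<dots> \<le> L * dist f g" using L0 dist_bounded by (intro mult_left_mono) auto
    finally show ?thesis .
  qed
  have "0 \<le> L * dist f g" using L0 by simp
  from has_integral_bound_real[OF this finite.emptyI integrable_integral[OF
        integrable_diff[OF picard_integrand_integrable[OF f c] picard_integrand_integrable[OF g c]]] bound]
  have "norm (integral {0..c} (\<lambda>s. G (f s) - G (g s))) \<le> L * dist f g * c"
    using c by simp
  also have "\<dots> \<le> (T * L) * dist f g"
  proof -
    have "c * dist f g \<le> T * dist f g" using c by (intro mult_right_mono) auto
    from mult_left_mono[OF this L0] show ?thesis by (simp add: algebra_simps)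
  qed
  also have "\<dots> \<le> 1/2 * dist f g" using time(2) by (intro mult_right_mono) auto
  finally show "dist (picard_map f t) (picard_map g t) \<le> 1/2 * dist f g"
    by (simp add: apply_picard_map f g c_def[symmetric] dist_norm
        integral_diff[OF picard_integrand_integrable[OF f c] picard_integrand_integrable[OF g c]])
qed

lemma ivp_solution_exists:
  "\<exists>z. ivp_solution G T z0 z \<and> (\<forall>t\<in>{0..T}. (z has_vector_derivative G (z t)) (at t within {0..T}))"
proof -
  have "complete picard_ball"
    unfolding picard_ball_def complete_eq_closed by (rule closed_PiC) simp
  moreover have "picard_ball \<noteq> {}" using mem_picard_ball[of "const_bcontfun z0"] by auto
  ultimately obtain f where f: "f \<in> picard_ball" "picard_map f = f"
    using Banach_fix[of picard_ball "1/2" picard_map] picard_map_into picard_map_contraction by auto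
  have z_eq: "f t = z0 + integral {0..t} (\<lambda>s. G (f s))" if "t \<in> {0..T}" for t
    using apply_picard_map[OF f(1), of t] f(2) that by simp
  have deriv: "(f has_vector_derivative G (f t)) (at t within {0..T})" if t: "t \<in> {0..T}" for t
  proof (rule has_vector_derivative_transform[OF t z_eq])
    show "((\<lambda>t. z0 + integral {0..t} (\<lambda>s. G (f s))) has_vector_derivative G (f t)) (at t within {0..T})"
      using integral_has_vector_derivative[OF picard_integrand_continuous[OF f(1)] t]
      by (auto intro!: derivative_eq_intros)
  qed
  have "f 0 = z0" using z_eq[of 0] time(1) by simp
  then have "ivp_solution G T z0 f"
    unfolding ivp_solution_def using deriv by (intro conjI exI[of _ "\<lambda>t. G (f t)"]) auto
  with deriv show ?thesis by blast
qed

end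

lemma ivp_local_well_posed:
  fixes G :: "'a::banach \<Rightarrow> 'a"
  assumes lipschitz: "\<And>R. \<exists>L. L-lipschitz_on (cball 0 R) G" and R0: "0 \<le> R0"
  obtains T where "T > 0"
    "\<And>z0. norm z0 \<le> R0 \<Longrightarrow>
       \<exists>z. ivp_solution G T z0 z \<and> (\<forall>t\<in>{0..T}. (z has_vector_derivative G (z t)) (at t within {0..T}))"
    "\<And>z0 y0 z y t. norm z0 \<le> R0 \<Longrightarrow> norm y0 \<le> R0 \<Longrightarrow> ivp_solution G T z0 z \<Longrightarrow>
       ivp_solution G T y0 y \<Longrightarrow> t \<in> {0..T} \<Longrightarrow> norm (z t - y t) \<le> 2 * norm (z0 - y0)"
proof -
  define R where "R = R0 + 1"
  obtain L where L: "L-lipschitz_on (cball 0 R) G" using lipschitz by blast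
  have L0: "0 \<le> L" using L by (simp add: lipschitz_on_def)
  define M where "M = norm (G 0) + L * R"
  have M0: "0 \<le> M" using L0 R0 by (simp add: M_def R_def)
  have bound: "norm (G x) \<le> M" if "norm x \<le> R" for x
  proof -
    have "norm (G x - G 0) \<le> L * norm x"
      using lipschitz_onD[OF L, of x 0] that R0 by (simp add: dist_norm R_def)
    then show ?thesis
      using norm_triangle_ineq2[of "G x" "G 0"] mult_left_mono[OF that L0] by (simp add: M_def)
  qed
  define T where "T = 1 / (2 * (L + M + 1))"
  have T: "0 < T" "T * L \<le> 1/2" "T * M < 1/2" using L0 M0 by (simp_all add: T_def field_simps)
  show ?thesis
  proof (rule that[OF T(1)])
    show "\<exists>z. ivp_solution G T z0 z \<and> (\<forall>t\<in>{0..T}. (z has_vector_derivative G (z t)) (at t within {0..T}))"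
      if "norm z0 \<le> R0" for z0
      using ivp_solution_exists[OF L bound _ T(1,2)] that T(3) by (simp add: R_def)
    show "norm (z t - y t) \<le> 2 * norm (z0 - y0)"
      if "norm z0 \<le> R0" "norm y0 \<le> R0" "ivp_solution G T z0 z" "ivp_solution G T y0 y" "t \<in> {0..T}"
      for z0 y0 z y t
    proof (rule ivp_solution_dist_le[OF that(3,4) _ _ L T(2) that(5)])
      show "norm (z s) \<le> R \<and> norm (y s) \<le> R" if "s \<in> {0..T}" for s
        using ivp_solution_norm_less[where R=R, OF \<open>ivp_solution G T z0 z\<close> M0 bound _ that]
          ivp_solution_norm_less[where R=R, OF \<open>ivp_solution G T y0 y\<close> M0 bound _ that]
          \<open>norm z0 \<le> R0\<close> \<open>norm y0 \<le> R0\<close> T(3) by (simp add: R_def)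
    qed (use T in auto)
  qed
qed

section \<open>The nonlocal operator on \<open>L\<^sup>p \<inter> L\<^sup>\<infinity>\<close>\<close>

lemma powr_tangent_le:
  fixes P m t :: real
  assumes P: "1 \<le> P" and m: "0 \<le> m" and t: "0 \<le> t"
  shows "P * m powr (P - 1) * t \<le> t powr P + (P - 1) * m powr P"
proof (cases "P = 1 \<or> m = 0")
  case True
  then show ?thesis
    using P t by (auto simp: powr_def mult_left_le_one_le)
next
  case False
  then have P1: "P > 1" and mp: "m > 0" using P m by auto
  define Q where "Q = P / (P - 1)"
  have Q: "Q > 1" "1/P + 1/Q = 1" using P1 by (auto simp: Q_def field_simps)
  have "t * m powr (P - 1) \<le> t powr P / P + (m powr (P - 1)) powr Q / Q"
    by (rule Youngs_inequality[OF P1 Q(1) Q(2) t]) simp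
  also have "(m powr (P - 1)) powr Q = m powr P" using P1 by (simp add: powr_powr Q_def)
  finally have "P * (t * m powr (P - 1)) \<le> P * (t powr P / P + m powr P / Q)"
    using P1 by (intro mult_left_mono) auto
  also have "\<dots> = t powr P + (P - 1) * m powr P" using P1 by (simp add: Q_def field_simps)
  finally show ?thesis by (simp add: algebra_simps)
qed

lemma nn_integral_powr_tangent_le:
  fixes a b :: "real \<Rightarrow> real"
  assumes P: "1 \<le> P" and m: "0 < m" and a0: "\<And>y. 0 \<le> a y" and b0: "\<And>y. 0 \<le> b y"
    and [measurable]: "a \<in> borel_measurable lborel" "b \<in> borel_measurable lborel"
    and A: "(\<integral>\<^sup>+ y. ennreal (a y) \<partial>lborel) = ennreal A" "0 \<le> A"
    and c: "(\<integral>\<^sup>+ y. ennreal (a y * b y) \<partial>lborel) = ennreal c" "0 \<le> c"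
  shows "ennreal (P * m powr (P - 1) * c)
    \<le> (\<integral>\<^sup>+ y. ennreal (a y * b y powr P) \<partial>lborel) + ennreal ((P - 1) * m powr P * A)"
proof -
  have "ennreal (P * m powr (P - 1) * c) = (\<integral>\<^sup>+ y. ennreal (a y * (P * m powr (P - 1) * b y)) \<partial>lborel)"
    using P m c(2)
    by (simp add: c(1)[symmetric] nn_integral_cmult[symmetric] ennreal_mult a0 b0 mult.left_commute)
  also have "\<dots> \<le> (\<integral>\<^sup>+ y. ennreal (a y * b y powr P) + ennreal ((P - 1) * m powr P) * ennreal (a y) \<partial>lborel)"
  proof (rule nn_integral_mono)
    fix y
    have "a y * (P * m powr (P - 1) * b y) \<le> a y * (b y powr P + (P - 1) * m powr P)"
      by (intro mult_left_mono powr_tangent_le P a0 b0) (use m in auto)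
    also have "\<dots> = a y * b y powr P + (P - 1) * m powr P * a y" by (simp add: algebra_simps)
    finally show "ennreal (a y * (P * m powr (P - 1) * b y))
        \<le> ennreal (a y * b y powr P) + ennreal ((P - 1) * m powr P) * ennreal (a y)"
      using P a0[of y] b0[of y] m
      by (simp add: ennreal_mult[symmetric] ennreal_plus[symmetric] del: ennreal_plus)
  qed
  also have "\<dots> = (\<integral>\<^sup>+ y. ennreal (a y * b y powr P) \<partial>lborel) + ennreal ((P - 1) * m powr P * A)"
    using P m A(2) by (simp add: nn_integral_add nn_integral_cmult A(1)[symmetric] ennreal_mult)
  finally show ?thesis .
qed

text \<open>Jensen's inequality for the finite measure with density \<open>a\<close>: the tangent-line inequality
  is integrated at the mean value \<open>m = c / A\<close>.\<close>
lemma jensen_weighted_powr: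
  fixes a b :: "real \<Rightarrow> real"
  assumes P: "1 \<le> P" and a0: "\<And>y. 0 \<le> a y" and b0: "\<And>y. 0 \<le> b y"
    and [measurable]: "a \<in> borel_measurable lborel" "b \<in> borel_measurable lborel"
    and A: "(\<integral>\<^sup>+ y. ennreal (a y) \<partial>lborel) = ennreal A" "0 \<le> A"
    and c: "(\<integral>\<^sup>+ y. ennreal (a y * b y) \<partial>lborel) = ennreal c" "0 \<le> c"
  shows "ennreal (c powr P) \<le> ennreal (A powr (P - 1)) * (\<integral>\<^sup>+ y. ennreal (a y * b y powr P) \<partial>lborel)"
proof (cases "c = 0")
  case True
  then show ?thesis by simp
next
  case False
  then have cp: "c > 0" using c by simp
  have Ap: "A > 0"
  proof (rule ccontr)
    assume "\<not> A > 0"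
    then have "AE y in lborel. ennreal (a y) = 0" using A by (subst nn_integral_0_iff_AE[symmetric]) auto
    then have "AE y in lborel. a y = 0" by eventually_elim (metis a0 antisym ennreal_eq_0_iff)
    then have "AE y in lborel. ennreal (a y * b y) = 0" by (auto elim!: eventually_mono)
    then have "(\<integral>\<^sup>+ y. ennreal (a y * b y) \<partial>lborel) = 0" by (subst nn_integral_0_iff_AE) auto
    then show False using c cp by simp
  qed
  define m I where "m = c / A" and "I = (\<integral>\<^sup>+ y. ennreal (a y * b y powr P) \<partial>lborel)"
  have mp: "m > 0" using cp Ap by (simp add: m_def)
  have eq: "P * m powr (P - 1) * c = P * (A * m powr P)"
    using mp Ap by (simp add: m_def powr_diff field_simps)
  from nn_integral_powr_tangent_le[OF P mp a0 b0 _ _ A c]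
  have key: "ennreal (P * (A * m powr P)) \<le> I + ennreal ((P - 1) * m powr P * A)"
    unfolding eq I_def by simp
  show ?thesis
  proof (cases "I = top")
    case True
    then show ?thesis using Ap by (simp add: I_def ennreal_mult_top)
  next
    case False
    then obtain i where i: "I = ennreal i" "0 \<le> i" by (cases I) auto
    have "P * (A * m powr P) \<le> i + (P - 1) * m powr P * A"
      using key P Ap mp i by (simp add: ennreal_plus[symmetric] ennreal_le_iff del: ennreal_plus)
    then have "A powr (P - 1) * (A * m powr P) \<le> A powr (P - 1) * i"
      by (intro mult_left_mono) (auto simp: algebra_simps)
    moreover have "c powr P = A powr (P - 1) * (A * m powr P)"
      using Ap mp by (simp add: m_def powr_divide powr_diff field_simps)
    ultimately show ?thesis using i Ap by (simp add: I_def[symmetric] ennreal_mult[symmetric])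
  qed
qed

definition L1_norm :: "(real \<Rightarrow> real) \<Rightarrow> real" where
  "L1_norm \<alpha> = enn2real (\<integral>\<^sup>+ y. ennreal \<bar>\<alpha> y\<bar> \<partial>lborel)"

definition abs_kernel_conv :: "(real \<Rightarrow> real) \<Rightarrow> (real \<Rightarrow> real) \<Rightarrow> real \<Rightarrow> real" where
  "abs_kernel_conv \<alpha> d x = enn2real (\<integral>\<^sup>+ y. ennreal (\<bar>\<alpha> (y - x)\<bar> * \<bar>d y\<bar>) \<partial>lborel)"

lemma L1_norm_nonneg: "0 \<le> L1_norm \<alpha>"
  by (simp add: L1_norm_def)

lemma integrable_lborel_measurable [measurable_dest]:
  fixes \<alpha> :: "real \<Rightarrow> real"
  shows "integrable lborel \<alpha> \<Longrightarrow> \<alpha> \<in> borel_measurable borel"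
  using borel_measurable_integrable[of lborel \<alpha>] by simp

lemma nn_integral_abs_shift_eq_L1_norm:
  fixes \<alpha> :: "real \<Rightarrow> real"
  assumes \<alpha>: "integrable lborel \<alpha>"
  shows "(\<integral>\<^sup>+ y. ennreal \<bar>\<alpha> (y - x)\<bar> \<partial>lborel) = ennreal (L1_norm \<alpha>)"
    "(\<integral>\<^sup>+ x. ennreal \<bar>\<alpha> (y - x)\<bar> \<partial>lborel) = ennreal (L1_norm \<alpha>)"
proof -
  have [measurable]: "\<alpha> \<in> borel_measurable borel" using \<alpha> by measurable
  have "(\<integral>\<^sup>+ y. ennreal \<bar>\<alpha> y\<bar> \<partial>lborel) = ennreal (L1_norm \<alpha>)"
    using \<alpha> by (simp add: L1_norm_def integrable_iff_bounded less_top)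
  then show "(\<integral>\<^sup>+ y. ennreal \<bar>\<alpha> (y - x)\<bar> \<partial>lborel) = ennreal (L1_norm \<alpha>)"
    "(\<integral>\<^sup>+ x. ennreal \<bar>\<alpha> (y - x)\<bar> \<partial>lborel) = ennreal (L1_norm \<alpha>)"
    using nn_integral_real_affine[where f="\<lambda>s. ennreal \<bar>\<alpha> s\<bar>" and c=1 and t="-x"]
      nn_integral_real_affine[where f="\<lambda>s. ennreal \<bar>\<alpha> s\<bar>" and c="-1" and t=y]
    by simp_all
qed

lemma abs_kernel_conv_measurable:
  fixes \<alpha> d :: "real \<Rightarrow> real"
  assumes [measurable]: "integrable lborel \<alpha>" "d \<in> borel_measurable lborel"
  shows "abs_kernel_conv \<alpha> d \<in> borel_measurable lborel"
proof -
  have "(\<lambda>(x, y). ennreal (\<bar>\<alpha> (y - x)\<bar> * \<bar>d y\<bar>)) \<in> borel_measurable (lborel \<Otimes>\<^sub>M lborel)"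
    by measurable
  from lborel.borel_measurable_nn_integral_fst[OF this]
  have [measurable]: "(\<lambda>x. \<integral>\<^sup>+ y. ennreal (\<bar>\<alpha> (y - x)\<bar> * \<bar>d y\<bar>) \<partial>lborel) \<in> borel_measurable lborel"
    by simp
  show ?thesis unfolding abs_kernel_conv_def by measurable
qed

lemma abs_kernel_conv_bound:
  fixes \<alpha> d :: "real \<Rightarrow> real"
  assumes \<alpha>: "integrable lborel \<alpha>" and d: "d \<in> borel_measurable lborel"
    and D: "AE y in lborel. \<bar>d y\<bar> \<le> D" "0 \<le> D"
  shows "(\<integral>\<^sup>+ y. ennreal (\<bar>\<alpha> (y - x)\<bar> * \<bar>d y\<bar>) \<partial>lborel) = ennreal (abs_kernel_conv \<alpha> d x)"
    "0 \<le> abs_kernel_conv \<alpha> d x" "abs_kernel_conv \<alpha> d x \<le> L1_norm \<alpha> * D"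
proof -
  have "(\<integral>\<^sup>+ y. ennreal (\<bar>\<alpha> (y - x)\<bar> * \<bar>d y\<bar>) \<partial>lborel) \<le> (\<integral>\<^sup>+ y. ennreal \<bar>\<alpha> (y - x)\<bar> * ennreal D \<partial>lborel)"
    using D(1) by (intro nn_integral_mono_AE) (auto elim!: eventually_mono simp: ennreal_mult[symmetric] mult_left_mono)
  also have "\<dots> = ennreal (L1_norm \<alpha> * D)"
    using \<alpha> D(2) by (simp add: nn_integral_multc nn_integral_abs_shift_eq_L1_norm ennreal_mult L1_norm_nonneg)
  finally have le: "(\<integral>\<^sup>+ y. ennreal (\<bar>\<alpha> (y - x)\<bar> * \<bar>d y\<bar>) \<partial>lborel) \<le> ennreal (L1_norm \<alpha> * D)" .
  then have "(\<integral>\<^sup>+ y. ennreal (\<bar>\<alpha> (y - x)\<bar> * \<bar>d y\<bar>) \<partial>lborel) < top"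
    by (rule le_less_trans) simp
  then show "(\<integral>\<^sup>+ y. ennreal (\<bar>\<alpha> (y - x)\<bar> * \<bar>d y\<bar>) \<partial>lborel) = ennreal (abs_kernel_conv \<alpha> d x)"
    unfolding abs_kernel_conv_def by (simp add: less_top)
  show "0 \<le> abs_kernel_conv \<alpha> d x" by (simp add: abs_kernel_conv_def)
  show "abs_kernel_conv \<alpha> d x \<le> L1_norm \<alpha> * D"
    unfolding abs_kernel_conv_def using enn2real_mono[OF le] D(2) L1_norm_nonneg by simp
qed

lemma lp_integral_abs_kernel_conv_le:
  fixes \<alpha> d :: "real \<Rightarrow> real"
  assumes P: "1 \<le> P" and \<alpha>: "integrable lborel \<alpha>" and d: "d \<in> borel_measurable lborel"
    and D: "AE y in lborel. \<bar>d y\<bar> \<le> D" "0 \<le> D"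
  shows "lp_integral P (abs_kernel_conv \<alpha> d)
    \<le> ennreal (L1_norm \<alpha> powr (P - 1)) * (ennreal (L1_norm \<alpha>) * lp_integral P d)"
proof -
  have [measurable]: "\<alpha> \<in> borel_measurable borel" "d \<in> borel_measurable borel" using \<alpha> d by measurable
  have joint: "(\<lambda>(x, y). ennreal (\<bar>\<alpha> (y - x)\<bar> * \<bar>d y\<bar> powr P)) \<in> borel_measurable (lborel \<Otimes>\<^sub>M lborel)"
    by measurable
  have "lp_integral P (abs_kernel_conv \<alpha> d)
      \<le> (\<integral>\<^sup>+ x. ennreal (L1_norm \<alpha> powr (P - 1)) * (\<integral>\<^sup>+ y. ennreal (\<bar>\<alpha> (y - x)\<bar> * \<bar>d y\<bar> powr P) \<partial>lborel) \<partial>lborel)"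
    unfolding lp_integral_def
  proof (rule nn_integral_mono)
    fix x
    show "ennreal (\<bar>abs_kernel_conv \<alpha> d x\<bar> powr P)
        \<le> ennreal (L1_norm \<alpha> powr (P - 1)) * (\<integral>\<^sup>+ y. ennreal (\<bar>\<alpha> (y - x)\<bar> * \<bar>d y\<bar> powr P) \<partial>lborel)"
      using jensen_weighted_powr[OF P, of "\<lambda>y. \<bar>\<alpha> (y - x)\<bar>" "\<lambda>y. \<bar>d y\<bar>" "L1_norm \<alpha>" "abs_kernel_conv \<alpha> d x"]
        nn_integral_abs_shift_eq_L1_norm(1)[OF \<alpha>, of x] abs_kernel_conv_bound(1,2)[OF \<alpha> d D, of x] L1_norm_nonneg
      by simp
  qed
  also have "\<dots> = ennreal (L1_norm \<alpha> powr (P - 1))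
      * (\<integral>\<^sup>+ y. (\<integral>\<^sup>+ x. ennreal (\<bar>\<alpha> (y - x)\<bar> * \<bar>d y\<bar> powr P) \<partial>lborel) \<partial>lborel)"
    using lborel.borel_measurable_nn_integral_fst[OF joint]
    by (simp add: nn_integral_cmult lborel_pair.Fubini'[OF joint])
  also have "(\<integral>\<^sup>+ y. (\<integral>\<^sup>+ x. ennreal (\<bar>\<alpha> (y - x)\<bar> * \<bar>d y\<bar> powr P) \<partial>lborel) \<partial>lborel)
      = (\<integral>\<^sup>+ y. ennreal (L1_norm \<alpha>) * ennreal (\<bar>d y\<bar> powr P) \<partial>lborel)"
    by (intro nn_integral_cong)
      (simp add: ennreal_mult nn_integral_multc nn_integral_abs_shift_eq_L1_norm(2)[OF \<alpha>])
  also have "\<dots> = ennreal (L1_norm \<alpha>) * lp_integral P d"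
    unfolding lp_integral_def by (rule nn_integral_cmult) simp
  finally show ?thesis .
qed

lemma abs_kernel_conv_XSp:
  fixes \<alpha> d :: "real \<Rightarrow> real"
  assumes p: "1 \<le> p" and \<alpha>: "integrable lborel \<alpha>" and d: "d \<in> XSp p"
  shows "abs_kernel_conv \<alpha> d \<in> XSp p" "Xnorm p (abs_kernel_conv \<alpha> d) \<le> L1_norm \<alpha> * Xnorm p d"
proof -
  define A where "A = L1_norm \<alpha>"
  have A0: "0 \<le> A" by (simp add: A_def L1_norm_nonneg)
  have dm: "d \<in> borel_measurable lborel" using d by (rule XSp_measurable)
  have dD: "AE y in lborel. \<bar>d y\<bar> \<le> Linf_norm d"
    by (rule AE_abs_le_Linf_norm[OF XSp_esssup_finite[OF d]])
  note bound = abs_kernel_conv_bound[OF \<alpha> dm dD Linf_norm_nonneg]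
  have Hm: "abs_kernel_conv \<alpha> d \<in> borel_measurable lborel" by (rule abs_kernel_conv_measurable[OF \<alpha> dm])
  have "AE x in lborel. \<bar>abs_kernel_conv \<alpha> d x\<bar> \<le> A * Linf_norm d" using bound(2,3) by (simp add: A_def)
  from Linf_norm_le[OF Hm _ this]
  have L: "Linf_norm (abs_kernel_conv \<alpha> d) \<le> A * Linf_norm d"
    "esssup lborel (\<lambda>x. ereal \<bar>abs_kernel_conv \<alpha> d x\<bar>) < top"
    using A0 Linf_norm_nonneg by auto
  have "abs_kernel_conv \<alpha> d \<in> XSp p \<and> Lp_norm p (abs_kernel_conv \<alpha> d) \<le> A * Lp_norm p d"
  proof (cases "p = top")
    case True
    then show ?thesis using L Hm by (simp add: XSp_top_iff Lp_norm_def)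
  next
    case False
    define P where "P = enn2real p"
    have P: "1 \<le> P" using enn2real_ge_1 p False by (auto simp: P_def)
    have di: "lp_integral P d < top" using d False by (simp add: XSp_finite_iff P_def)
    have "lp_integral P (abs_kernel_conv \<alpha> d) \<le> ennreal (A powr (P - 1)) * (ennreal A * ennreal (Lp_norm p d powr P))"
      using lp_integral_abs_kernel_conv_le[OF P \<alpha> dm dD Linf_norm_nonneg]
        lp_integral_eq_Lp_norm_powr[OF False p di[unfolded P_def]] by (simp add: A_def P_def)
    also have "\<dots> = ennreal ((A * Lp_norm p d) powr P)"
    proof (cases "A = 0")
      case False
      then have "A powr (P - 1) * (A * Lp_norm p d powr P) = (A * Lp_norm p d) powr P"
        using A0 by (simp add: powr_mult powr_diff Lp_norm_nonneg field_simps)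
      then show ?thesis using A0 by (simp add: ennreal_mult[symmetric] Lp_norm_nonneg)
    qed simp
    finally have I: "lp_integral P (abs_kernel_conv \<alpha> d) \<le> ennreal ((A * Lp_norm p d) powr P)" .
    have "lp_integral P (abs_kernel_conv \<alpha> d) < top" using I by (rule le_less_trans) simp
    moreover have "Lp_norm p (abs_kernel_conv \<alpha> d) \<le> A * Lp_norm p d"
      by (rule Lp_norm_le_of_lp_integral_le[OF False p]) (use I A0 Lp_norm_nonneg[of p d] in \<open>auto simp: P_def\<close>)
    ultimately show ?thesis using L Hm False by (simp add: XSp_finite_iff P_def)
  qed
  then show "abs_kernel_conv \<alpha> d \<in> XSp p" "Xnorm p (abs_kernel_conv \<alpha> d) \<le> L1_norm \<alpha> * Xnorm p d"
    using L by (auto simp: Xnorm_def A_def algebra_simps)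
qed

lemma C1_differentiable_measurable:
  fixes w :: "real \<Rightarrow> real"
  assumes "w C1_differentiable_on UNIV"
  shows "w \<in> borel_measurable borel"
proof (rule borel_measurable_continuous_onI)
  have "\<And>x. w differentiable at x" using assms by (auto simp: C1_differentiable_on_eq)
  then show "continuous_on UNIV w"
    by (intro continuous_at_imp_continuous_on ballI differentiable_imp_continuous_within) auto
qed

lemma C1_differentiable_lipschitz_bounded:
  fixes w :: "real \<Rightarrow> real"
  assumes "w C1_differentiable_on UNIV"
  obtains B where "0 \<le> B" "\<And>a b. \<bar>a\<bar> \<le> r \<Longrightarrow> \<bar>b\<bar> \<le> r \<Longrightarrow> \<bar>w a - w b\<bar> \<le> B * \<bar>a - b\<bar>"
proof -
  define w' where "w' x = vector_derivative w (at x)" for x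
  have diff: "\<And>x. w differentiable at x" and cw': "continuous_on UNIV w'"
    using assms by (auto simp: C1_differentiable_on_eq w'_def)
  define S where "S = {-\<bar>r\<bar>..\<bar>r\<bar>}"
  have "continuous_on S (\<lambda>x. \<bar>w' x\<bar>)" by (intro continuous_intros continuous_on_subset[OF cw']) auto
  then obtain x0 where x0: "x0 \<in> S" "\<And>y. y \<in> S \<Longrightarrow> \<bar>w' y\<bar> \<le> \<bar>w' x0\<bar>"
    using continuous_attains_sup[OF compact_Icc, of "-\<bar>r\<bar>" "\<bar>r\<bar>" "\<lambda>x. \<bar>w' x\<bar>"] by (auto simp: S_def)
  have "\<bar>w a - w b\<bar> \<le> \<bar>w' x0\<bar> * \<bar>a - b\<bar>" if "\<bar>a\<bar> \<le> r" "\<bar>b\<bar> \<le> r" for a b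
  proof -
    have "norm (w a - w b) \<le> \<bar>w' x0\<bar> * norm (a - b)"
    proof (rule field_differentiable_bound[of S w w'])
      fix z
      assume "z \<in> S"
      have "(w has_vector_derivative w' z) (at z)"
        using diff[of z] by (simp add: w'_def vector_derivative_works)
      then show "(w has_field_derivative w' z) (at z within S)"
        by (simp add: has_real_derivative_iff_has_vector_derivative[symmetric] has_field_derivative_at_within)
      show "norm (w' z) \<le> \<bar>w' x0\<bar>" using x0 \<open>z \<in> S\<close> by simp
    qed (use that in \<open>auto simp: S_def\<close>)
    then show ?thesis by simp
  qed
  then show ?thesis using that[of "\<bar>w' x0\<bar>"] by simp
qed

lemma peri_rhs_measurable:
  fixes \<alpha> w v :: "real \<Rightarrow> real"
  assumes [measurable]: "\<alpha> \<in> borel_measurable borel" "w \<in> borel_measurable borel" "v \<in> borel_measurable borel"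
  shows "peri_rhs \<alpha> w v \<in> borel_measurable lborel"
proof -
  have "(\<lambda>(x, y). \<alpha> (y - x) * w (v y - v x)) \<in> borel_measurable (lborel \<Otimes>\<^sub>M lborel)" by measurable
  then have "(\<lambda>x. \<integral> y. \<alpha> (y - x) * w (v y - v x) \<partial>lborel) \<in> borel_measurable lborel"
    by (intro lborel.borel_measurable_lebesgue_integral) simp
  then show ?thesis by (simp add: peri_rhs_def[abs_def])
qed

lemma peri_rhs_cong_AE:
  fixes \<alpha> w v v' :: "real \<Rightarrow> real"
  assumes [measurable]: "\<alpha> \<in> borel_measurable borel" "w \<in> borel_measurable borel"
    "v \<in> borel_measurable borel" "v' \<in> borel_measurable borel"
    and "AE x in lborel. v x = v' x"
  shows "AE x in lborel. peri_rhs \<alpha> w v x = peri_rhs \<alpha> w v' x"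
  using assms(5)
proof eventually_elim
  case (elim x)
  show ?case
    unfolding peri_rhs_def by (rule integral_cong_AE) (use assms(5) elim in \<open>auto elim!: eventually_mono\<close>)
qed

lemma integrable_peri_integrand:
  fixes \<alpha> w u :: "real \<Rightarrow> real"
  assumes \<alpha>: "integrable lborel \<alpha>" and B: "0 \<le> B" and w0: "w 0 = 0"
    and w: "\<And>a b. \<bar>a\<bar> \<le> 2 * R \<Longrightarrow> \<bar>b\<bar> \<le> 2 * R \<Longrightarrow> \<bar>w a - w b\<bar> \<le> B * \<bar>a - b\<bar>"
    and [measurable]: "w \<in> borel_measurable borel" "u \<in> borel_measurable borel"
    and u: "AE y in lborel. \<bar>u y\<bar> \<le> R" "\<bar>u x\<bar> \<le> R"
  shows "integrable lborel (\<lambda>y. \<alpha> (y - x) * w (u y - u x))"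
proof (rule Bochner_Integration.integrable_bound)
  have [measurable]: "\<alpha> \<in> borel_measurable borel" using \<alpha> by measurable
  have "0 \<le> R" using u(2) by linarith
  show "integrable lborel (\<lambda>y. (B * (2 * R)) * \<alpha> (- x + 1 * y))"
    by (intro integrable_mult_right lborel_integrable_real_affine[OF \<alpha>]) simp
  show "(\<lambda>y. \<alpha> (y - x) * w (u y - u x)) \<in> borel_measurable lborel" by measurable
  show "AE y in lborel. norm (\<alpha> (y - x) * w (u y - u x)) \<le> norm ((B * (2 * R)) * \<alpha> (- x + 1 * y))"
    using u(1)
  proof eventually_elim
    case (elim y)
    have "\<bar>w (u y - u x) - w 0\<bar> \<le> B * \<bar>u y - u x - 0\<bar>" by (rule w) (use elim u(2) in auto)
    also have "\<dots> \<le> B * (2 * R)" using elim u(2) B by (intro mult_left_mono) auto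
    finally show ?case using w0 B \<open>0 \<le> R\<close> by (simp add: abs_mult mult.commute mult_left_mono)
  qed
qed

text \<open>With \<open>d = v - v'\<close>, the Lipschitz bound on \<open>w\<close> splits
  \<open>|w(v y - v x) - w(v' y - v' x)| \<le> B (|d y| + |d x|)\<close>.\<close>
lemma peri_rhs_diff_bound:
  fixes \<alpha> w v v' :: "real \<Rightarrow> real"
  assumes \<alpha>: "integrable lborel \<alpha>" and B: "0 \<le> B" and w0: "w 0 = 0"
    and w: "\<And>a b. \<bar>a\<bar> \<le> 2 * R \<Longrightarrow> \<bar>b\<bar> \<le> 2 * R \<Longrightarrow> \<bar>w a - w b\<bar> \<le> B * \<bar>a - b\<bar>"
    and [measurable]: "w \<in> borel_measurable borel" "v \<in> borel_measurable borel" "v' \<in> borel_measurable borel"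
    and bounded: "AE y in lborel. \<bar>v y\<bar> \<le> R \<and> \<bar>v' y\<bar> \<le> R"
  shows "AE x in lborel. \<bar>peri_rhs \<alpha> w v x - peri_rhs \<alpha> w v' x\<bar>
      \<le> B * (abs_kernel_conv \<alpha> (\<lambda>y. v y - v' y) x + L1_norm \<alpha> * \<bar>v x - v' x\<bar>)"
  using bounded
proof eventually_elim
  case (elim x)
  have [measurable]: "\<alpha> \<in> borel_measurable borel" using \<alpha> by measurable
  define d where "d y = v y - v' y" for y
  have [measurable]: "d \<in> borel_measurable borel" unfolding d_def by measurable
  have dR: "AE y in lborel. \<bar>d y\<bar> \<le> 2 * R" using bounded by eventually_elim (auto simp: d_def)
  have R0: "0 \<le> R" using elim by linarith
  have i1: "integrable lborel (\<lambda>y. \<alpha> (y - x) * w (v y - v x))"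
    using bounded elim by (intro integrable_peri_integrand[OF \<alpha> B w0 w]) (auto elim!: eventually_mono)
  have i2: "integrable lborel (\<lambda>y. \<alpha> (y - x) * w (v' y - v' x))"
    using bounded elim by (intro integrable_peri_integrand[OF \<alpha> B w0 w]) (auto elim!: eventually_mono)
  have "ennreal \<bar>peri_rhs \<alpha> w v x - peri_rhs \<alpha> w v' x\<bar>
      \<le> (\<integral>\<^sup>+ y. ennreal (norm (\<alpha> (y - x) * w (v y - v x) - \<alpha> (y - x) * w (v' y - v' x))) \<partial>lborel)"
    using integral_norm_bound_ennreal[OF Bochner_Integration.integrable_diff[OF i1 i2]]
    by (simp add: peri_rhs_def Bochner_Integration.integral_diff[OF i1 i2])
  also have "\<dots> \<le> (\<integral>\<^sup>+ y. ennreal B * ennreal (\<bar>\<alpha> (y - x)\<bar> * \<bar>d y\<bar>) + ennreal (B * \<bar>d x\<bar>) * ennreal \<bar>\<alpha> (y - x)\<bar> \<partial>lborel)"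
    using bounded
  proof (intro nn_integral_mono_AE, eventually_elim)
    case (elim y)
    have "\<bar>w (v y - v x) - w (v' y - v' x)\<bar> \<le> B * \<bar>(v y - v x) - (v' y - v' x)\<bar>"
      by (rule w) (use elim \<open>\<bar>v x\<bar> \<le> R \<and> \<bar>v' x\<bar> \<le> R\<close> in auto)
    also have "\<dots> \<le> B * (\<bar>d y\<bar> + \<bar>d x\<bar>)" using B by (intro mult_left_mono) (auto simp: d_def)
    finally have wb: "\<bar>w (v y - v x) - w (v' y - v' x)\<bar> \<le> B * (\<bar>d y\<bar> + \<bar>d x\<bar>)" .
    have "norm (\<alpha> (y - x) * w (v y - v x) - \<alpha> (y - x) * w (v' y - v' x))
        = \<bar>\<alpha> (y - x)\<bar> * \<bar>w (v y - v x) - w (v' y - v' x)\<bar>"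
      by (simp add: abs_mult right_diff_distrib[symmetric])
    also have "\<dots> \<le> \<bar>\<alpha> (y - x)\<bar> * (B * (\<bar>d y\<bar> + \<bar>d x\<bar>))" by (intro mult_left_mono wb) auto
    also have "\<dots> = B * (\<bar>\<alpha> (y - x)\<bar> * \<bar>d y\<bar>) + (B * \<bar>d x\<bar>) * \<bar>\<alpha> (y - x)\<bar>" by (simp add: algebra_simps)
    finally show ?case
      using B by (simp add: ennreal_mult[symmetric] ennreal_plus[symmetric] del: ennreal_plus)
  qed
  also have "\<dots> = ennreal B * (\<integral>\<^sup>+ y. ennreal (\<bar>\<alpha> (y - x)\<bar> * \<bar>d y\<bar>) \<partial>lborel)
      + ennreal (B * \<bar>d x\<bar>) * (\<integral>\<^sup>+ y. ennreal \<bar>\<alpha> (y - x)\<bar> \<partial>lborel)"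
    by (simp add: nn_integral_add nn_integral_cmult)
  also have "\<dots> = ennreal (B * (abs_kernel_conv \<alpha> d x + L1_norm \<alpha> * \<bar>d x\<bar>))"
    using abs_kernel_conv_bound(1,2)[OF \<alpha> _ dR, of x] R0 B
    by (simp add: nn_integral_abs_shift_eq_L1_norm[OF \<alpha>] ennreal_mult[symmetric] ennreal_plus[symmetric]
        L1_norm_nonneg algebra_simps del: ennreal_plus)
  finally show ?case
    using B abs_kernel_conv_bound(2)[OF \<alpha> _ dR, of x] R0 L1_norm_nonneg[of \<alpha>]
    by (simp add: d_def[abs_def] ennreal_le_iff)
qed

lemma peri_majorant_XSp:
  fixes \<alpha> d :: "real \<Rightarrow> real"
  assumes p: "1 \<le> p" and \<alpha>: "integrable lborel \<alpha>" and d: "d \<in> XSp p" and B: "0 \<le> B"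
  shows "(\<lambda>x. B * (abs_kernel_conv \<alpha> d x + L1_norm \<alpha> * \<bar>d x\<bar>)) \<in> XSp p"
    "Xnorm p (\<lambda>x. B * (abs_kernel_conv \<alpha> d x + L1_norm \<alpha> * \<bar>d x\<bar>)) \<le> 2 * B * L1_norm \<alpha> * Xnorm p d"
proof -
  define A where "A = L1_norm \<alpha>"
  have A0: "0 \<le> A" by (simp add: A_def L1_norm_nonneg)
  have abs_d: "(\<lambda>x. \<bar>d x\<bar>) \<in> XSp p" "Xnorm p (\<lambda>x. \<bar>d x\<bar>) \<le> Xnorm p d"
    using XSp_dominated[OF p d, of "\<lambda>x. \<bar>d x\<bar>"] XSp_measurable[OF d] by auto
  note conv = abs_kernel_conv_XSp[OF p \<alpha> d]
  have sum: "(\<lambda>x. abs_kernel_conv \<alpha> d x + A * \<bar>d x\<bar>) \<in> XSp p"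
    by (rule XSp_add(1)[OF p conv(1) XSp_scale(1)[OF p abs_d(1)]])
  then show "(\<lambda>x. B * (abs_kernel_conv \<alpha> d x + L1_norm \<alpha> * \<bar>d x\<bar>)) \<in> XSp p"
    unfolding A_def by (rule XSp_scale(1)[OF p])
  have "Xnorm p (\<lambda>x. B * (abs_kernel_conv \<alpha> d x + A * \<bar>d x\<bar>))
      = B * Xnorm p (\<lambda>x. abs_kernel_conv \<alpha> d x + A * \<bar>d x\<bar>)"
    using XSp_scale(2)[OF p sum, of B] B by simp
  also have "\<dots> \<le> B * (Xnorm p (abs_kernel_conv \<alpha> d) + Xnorm p (\<lambda>x. A * \<bar>d x\<bar>))"
    using XSp_add(2)[OF p conv(1) XSp_scale(1)[OF p abs_d(1)]] B by (rule mult_left_mono)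
  also have "Xnorm p (\<lambda>x. A * \<bar>d x\<bar>) = A * Xnorm p (\<lambda>x. \<bar>d x\<bar>)"
    using XSp_scale(2)[OF p abs_d(1), of A] A0 by simp
  also have "B * (Xnorm p (abs_kernel_conv \<alpha> d) + A * Xnorm p (\<lambda>x. \<bar>d x\<bar>)) \<le> B * (A * Xnorm p d + A * Xnorm p d)"
    using conv(2) abs_d(2) A0 B by (intro mult_left_mono add_mono) (auto simp: A_def)
  finally show "Xnorm p (\<lambda>x. B * (abs_kernel_conv \<alpha> d x + L1_norm \<alpha> * \<bar>d x\<bar>)) \<le> 2 * B * L1_norm \<alpha> * Xnorm p d"
    by (simp add: A_def algebra_simps)
qed

lemma peri_rhs_lipschitz:
  fixes \<alpha> w :: "real \<Rightarrow> real"
  assumes p: "1 \<le> p" and \<alpha>: "integrable lborel \<alpha>" and wC: "w C1_differentiable_on UNIV" and w0: "w 0 = 0"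
  obtains K where "0 \<le> K"
    "\<And>v v'. v \<in> XSp p \<Longrightarrow> v' \<in> XSp p \<Longrightarrow> Linf_norm v \<le> R \<Longrightarrow> Linf_norm v' \<le> R \<Longrightarrow>
       (\<lambda>x. peri_rhs \<alpha> w v x - peri_rhs \<alpha> w v' x) \<in> XSp p \<and>
       Xnorm p (\<lambda>x. peri_rhs \<alpha> w v x - peri_rhs \<alpha> w v' x) \<le> K * Xnorm p (\<lambda>x. v x - v' x)"
proof -
  obtain B where B: "0 \<le> B" and w: "\<And>a b. \<bar>a\<bar> \<le> 2 * R \<Longrightarrow> \<bar>b\<bar> \<le> 2 * R \<Longrightarrow> \<bar>w a - w b\<bar> \<le> B * \<bar>a - b\<bar>"
    using C1_differentiable_lipschitz_bounded[OF wC] by blast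
  have [measurable]: "w \<in> borel_measurable borel" "\<alpha> \<in> borel_measurable borel"
    using C1_differentiable_measurable[OF wC] \<alpha> by measurable
  show ?thesis
  proof (rule that[of "2 * B * L1_norm \<alpha>"])
    show "0 \<le> 2 * B * L1_norm \<alpha>" using L1_norm_nonneg B by simp
    fix v v' :: "real \<Rightarrow> real"
    assume v: "v \<in> XSp p" and v': "v' \<in> XSp p" and vR: "Linf_norm v \<le> R" and v'R: "Linf_norm v' \<le> R"
    have [measurable]: "v \<in> borel_measurable borel" "v' \<in> borel_measurable borel"
      using XSp_measurable[OF v] XSp_measurable[OF v'] by simp_all
    define d where "d x = v x - v' x" for x
    have d: "d \<in> XSp p" unfolding d_def by (rule XSp_diff[OF p v v'])
    note majorant = peri_majorant_XSp[OF p \<alpha> d B]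
    have "AE y in lborel. \<bar>v y\<bar> \<le> R \<and> \<bar>v' y\<bar> \<le> R"
      using AE_abs_le_Linf_norm[OF XSp_esssup_finite[OF v]] AE_abs_le_Linf_norm[OF XSp_esssup_finite[OF v']]
      by eventually_elim (use vR v'R in auto)
    from peri_rhs_diff_bound[OF \<alpha> B w0 w _ _ _ this]
    have bound: "AE x in lborel. \<bar>peri_rhs \<alpha> w v x - peri_rhs \<alpha> w v' x\<bar>
        \<le> \<bar>B * (abs_kernel_conv \<alpha> d x + L1_norm \<alpha> * \<bar>d x\<bar>)\<bar>"
      by (auto simp: d_def[abs_def] elim!: eventually_mono intro: order_trans[OF _ abs_ge_self])
    have "(\<lambda>x. peri_rhs \<alpha> w v x - peri_rhs \<alpha> w v' x) \<in> borel_measurable lborel"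
      using peri_rhs_measurable[of \<alpha> w v] peri_rhs_measurable[of \<alpha> w v'] by measurable
    note dominated = XSp_dominated[OF p majorant(1) this bound]
    show "(\<lambda>x. peri_rhs \<alpha> w v x - peri_rhs \<alpha> w v' x) \<in> XSp p \<and>
        Xnorm p (\<lambda>x. peri_rhs \<alpha> w v x - peri_rhs \<alpha> w v' x) \<le> 2 * B * L1_norm \<alpha> * Xnorm p (\<lambda>x. v x - v' x)"
      using dominated(1) order_trans[OF dominated(2) majorant(2)] by (simp add: d_def[abs_def])
  qed
qed

lemma peri_rhs_XSp:
  fixes \<alpha> w :: "real \<Rightarrow> real"
  assumes p: "1 \<le> p" and \<alpha>: "integrable lborel \<alpha>" and wC: "w C1_differentiable_on UNIV" and w0: "w 0 = 0"
    and v: "v \<in> XSp p"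
  shows "peri_rhs \<alpha> w v \<in> XSp p"
proof -
  obtain K where "0 \<le> K" and K: "\<And>u u'. u \<in> XSp p \<Longrightarrow> u' \<in> XSp p \<Longrightarrow> Linf_norm u \<le> Linf_norm v \<Longrightarrow>
      Linf_norm u' \<le> Linf_norm v \<Longrightarrow> (\<lambda>x. peri_rhs \<alpha> w u x - peri_rhs \<alpha> w u' x) \<in> XSp p \<and>
      Xnorm p (\<lambda>x. peri_rhs \<alpha> w u x - peri_rhs \<alpha> w u' x) \<le> K * Xnorm p (\<lambda>x. u x - u' x)"
    by (rule peri_rhs_lipschitz[OF p \<alpha> wC w0, where R="Linf_norm v"]) (rule that)
  have "peri_rhs \<alpha> w (\<lambda>x. 0) = (\<lambda>x. 0)" using w0 by (simp add: peri_rhs_def[abs_def])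
  moreover have "Linf_norm (\<lambda>x::real. 0::real) \<le> Linf_norm v" by (simp add: Linf_norm_zero Linf_norm_nonneg)
  ultimately show ?thesis using K[OF v XSp_zero order.refl] by simp
qed

section \<open>The Cauchy problem as a first-order system\<close>

lemma has_vector_derivative_fst:
  "(Z has_vector_derivative Z') F \<Longrightarrow> ((\<lambda>s. fst (Z s)) has_vector_derivative fst Z') F"
  unfolding has_vector_derivative_def by (drule has_derivative_fst) simp

lemma has_vector_derivative_snd:
  "(Z has_vector_derivative Z') F \<Longrightarrow> ((\<lambda>s. snd (Z s)) has_vector_derivative snd Z') F"
  unfolding has_vector_derivative_def by (drule has_derivative_snd) simp

text \<open>The system \<open>(u, u\<^sub>t)' = (u\<^sub>t, F u)\<close> in \<open>xfamily \<times> xfamily\<close>, where \<open>F\<close> is the right-hand side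
  read on the \<open>p\<close>-component.\<close>
definition peri_field :: "ennreal \<Rightarrow> (real \<Rightarrow> real) \<Rightarrow> (real \<Rightarrow> real) \<Rightarrow> xfamily \<times> xfamily \<Rightarrow> xfamily \<times> xfamily" where
  "peri_field p \<alpha> w z = (snd z, X_embed p (peri_rhs \<alpha> w (X_component p (fst z))))"

lemma X_embed_peri_rhs_lipschitz:
  fixes \<alpha> w :: "real \<Rightarrow> real"
  assumes p: "1 \<le> p" and \<alpha>: "integrable lborel \<alpha>" and wC: "w C1_differentiable_on UNIV" and w0: "w 0 = 0"
  obtains K where "0 \<le> K" "\<And>X Y. norm X \<le> R \<Longrightarrow> norm Y \<le> R \<Longrightarrow>
    norm (X_embed p (peri_rhs \<alpha> w (X_component p X)) - X_embed p (peri_rhs \<alpha> w (X_component p Y)))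
      \<le> K * norm (X - Y)"
proof -
  obtain K where K0: "0 \<le> K" and K: "\<And>v v'. v \<in> XSp p \<Longrightarrow> v' \<in> XSp p \<Longrightarrow> Linf_norm v \<le> R \<Longrightarrow>
      Linf_norm v' \<le> R \<Longrightarrow> (\<lambda>x. peri_rhs \<alpha> w v x - peri_rhs \<alpha> w v' x) \<in> XSp p \<and>
      Xnorm p (\<lambda>x. peri_rhs \<alpha> w v x - peri_rhs \<alpha> w v' x) \<le> K * Xnorm p (\<lambda>x. v x - v' x)"
    by (rule peri_rhs_lipschitz[OF p \<alpha> wC w0, where R=R]) (rule that)
  show ?thesis
  proof (rule that[OF K0])
    fix X Y :: xfamily
    assume "norm X \<le> R" "norm Y \<le> R"
    let ?u = "X_component p X" and ?v = "X_component p Y"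
    have R: "Linf_norm ?u \<le> R" "Linf_norm ?v \<le> R"
      using Linf_norm_le_Xnorm[of _ p] Xnorm_X_component_le[OF p] \<open>norm X \<le> R\<close> \<open>norm Y \<le> R\<close>
      by (meson order_trans)+
    note Kuv = K[OF X_component_XSp[OF p] X_component_XSp[OF p] R]
    have "norm (X_embed p (peri_rhs \<alpha> w ?u) - X_embed p (peri_rhs \<alpha> w ?v))
        = Xnorm p (\<lambda>x. peri_rhs \<alpha> w ?u x - peri_rhs \<alpha> w ?v x)"
      using norm_X_embed[OF p conjunct1[OF Kuv]]
      by (simp add: X_embed_diff[OF p peri_rhs_XSp[OF p \<alpha> wC w0 X_component_XSp[OF p]]
            peri_rhs_XSp[OF p \<alpha> wC w0 X_component_XSp[OF p]]])
    also have "\<dots> \<le> K * Xnorm p (\<lambda>x. ?u x - ?v x)" using Kuv by blast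
    also have "\<dots> \<le> K * norm (X - Y)" using Xnorm_X_component_diff_le[OF p] K0 by (rule mult_left_mono)
    finally show "norm (X_embed p (peri_rhs \<alpha> w ?u) - X_embed p (peri_rhs \<alpha> w ?v)) \<le> K * norm (X - Y)" .
  qed
qed

lemma peri_field_lipschitz:
  fixes \<alpha> w :: "real \<Rightarrow> real"
  assumes p: "1 \<le> p" and \<alpha>: "integrable lborel \<alpha>" and wC: "w C1_differentiable_on UNIV" and w0: "w 0 = 0"
  shows "\<exists>L. L-lipschitz_on (cball 0 R) (peri_field p \<alpha> w)"
proof -
  obtain K where K0: "0 \<le> K" and K: "\<And>X Y. norm X \<le> R \<Longrightarrow> norm Y \<le> R \<Longrightarrow>
    norm (X_embed p (peri_rhs \<alpha> w (X_component p X)) - X_embed p (peri_rhs \<alpha> w (X_component p Y)))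
      \<le> K * norm (X - Y)"
    by (rule X_embed_peri_rhs_lipschitz[OF p \<alpha> wC w0, where R=R]) (rule that)
  show ?thesis
  proof (intro exI[of _ "1 + K"] lipschitz_onI)
    show "0 \<le> 1 + K" using K0 by simp
    fix z z' :: "xfamily \<times> xfamily"
    assume "z \<in> cball 0 R" "z' \<in> cball 0 R"
    then have R: "norm (fst z) \<le> R" "norm (fst z') \<le> R"
      using norm_fst_le[of "fst z" "snd z"] norm_fst_le[of "fst z'" "snd z'"] by auto
    have "norm (fst (z - z')) \<le> norm (z - z')" "norm (snd (z - z')) \<le> norm (z - z')"
      using norm_fst_le[of "fst (z - z')" "snd (z - z')"] norm_snd_le[of "snd (z - z')" "fst (z - z')"]
      by (simp_all only: prod.collapse)
    then have diff: "norm (fst z - fst z') \<le> norm (z - z')" "norm (snd z - snd z') \<le> norm (z - z')"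
      by simp_all
    have "dist (peri_field p \<alpha> w z) (peri_field p \<alpha> w z')
        = norm (snd z - snd z', X_embed p (peri_rhs \<alpha> w (X_component p (fst z)))
            - X_embed p (peri_rhs \<alpha> w (X_component p (fst z'))))"
      by (simp add: peri_field_def dist_norm)
    also have "\<dots> \<le> norm (snd z - snd z') + norm (X_embed p (peri_rhs \<alpha> w (X_component p (fst z)))
        - X_embed p (peri_rhs \<alpha> w (X_component p (fst z'))))"
      by (rule norm_Pair_le)
    also have "\<dots> \<le> norm (snd z - snd z') + K * norm (fst z - fst z')"
      using K[OF R] by simp
    also have "\<dots> \<le> (1 + K) * dist z z'"
      using diff mult_left_mono[OF diff(1) K0] by (simp add: dist_norm algebra_simps)
    finally show "dist (peri_field p \<alpha> w z) (peri_field p \<alpha> w z') \<le> (1 + K) * dist z z'" .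
  qed
qed

lemma is_solution_of_peri_field_solution:
  fixes \<alpha> w :: "real \<Rightarrow> real"
  assumes p: "1 \<le> p" and \<alpha>: "integrable lborel \<alpha>" and wC: "w C1_differentiable_on UNIV" and w0: "w 0 = 0"
    and a: "a \<in> XSp p" and b: "b \<in> XSp p" and Z0: "Z 0 = (X_embed p a, X_embed p b)"
    and Z: "\<And>t. t \<in> {0..T} \<Longrightarrow> (Z has_vector_derivative peri_field p \<alpha> w (Z t)) (at t within {0..T})"
  shows "is_solution p \<alpha> w T a b (\<lambda>t. X_component p (fst (Z t)))"
proof -
  define W where "W t = snd (peri_field p \<alpha> w (Z t))" for t
  have dU: "((\<lambda>t. fst (Z t)) has_vector_derivative snd (Z t)) (at t within {0..T})" if "t \<in> {0..T}" for t
    using has_vector_derivative_fst[OF Z[OF that]] by (simp add: peri_field_def)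
  have dU1: "((\<lambda>t. snd (Z t)) has_vector_derivative W t) (at t within {0..T})" if "t \<in> {0..T}" for t
    using has_vector_derivative_snd[OF Z[OF that]] by (simp add: W_def)
  have cZ: "continuous_on {0..T} Z" by (rule continuous_on_vector_derivative) (use Z in blast)
  then obtain R where R: "\<And>t. t \<in> {0..T} \<Longrightarrow> norm (Z t) \<le> R"
    using compact_imp_bounded[OF compact_continuous_image[OF cZ compact_Icc]] unfolding bounded_iff by blast
  obtain L where L: "L-lipschitz_on (cball 0 R) (peri_field p \<alpha> w)"
    using peri_field_lipschitz[OF p \<alpha> wC w0] by blast
  have "continuous_on {0..T} (\<lambda>t. peri_field p \<alpha> w (Z t))"
    by (rule continuous_on_compose2[OF lipschitz_on_continuous_on[OF L] cZ]) (use R in auto)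
  then have cW: "continuous_on {0..T} W" unfolding W_def by (intro continuous_intros)
  show ?thesis
    unfolding is_solution_def X_C2_def
  proof (intro exI conjI ballI)
    show "X_has_derivative p T (\<lambda>t. X_component p (fst (Z t))) (\<lambda>t. X_component p (snd (Z t)))"
      by (rule X_has_derivative_components[OF p dU])
    show "X_has_derivative p T (\<lambda>t. X_component p (snd (Z t))) (\<lambda>t. X_component p (W t))"
      by (rule X_has_derivative_components[OF p dU1])
    show "X_continuous p T (\<lambda>t. X_component p (W t))" by (rule X_continuous_components[OF p cW])
    show "AE x in lborel. X_component p (W t) x = peri_rhs \<alpha> w (X_component p (fst (Z t))) x" for t
      unfolding W_def peri_field_def
      by (simp add: AE_X_component_embed[OF p peri_rhs_XSp[OF p \<alpha> wC w0 X_component_XSp[OF p]]])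
    show "AE x in lborel. X_component p (fst (Z 0)) x = a x"
      using AE_X_component_embed[OF p a] by (simp add: Z0)
    show "AE x in lborel. X_component p (snd (Z 0)) x = b x"
      using AE_X_component_embed[OF p b] by (simp add: Z0)
  qed
qed

lemma is_solution_XSp: "is_solution p \<alpha> w T a b v \<Longrightarrow> t \<in> {0..T} \<Longrightarrow> v t \<in> XSp p"
  unfolding is_solution_def X_C2_def X_has_derivative_def by blast

lemma ivp_solution_of_is_solution:
  fixes \<alpha> w :: "real \<Rightarrow> real"
  assumes p: "1 \<le> p" and \<alpha>: "integrable lborel \<alpha>" and wC: "w C1_differentiable_on UNIV" and w0: "w 0 = 0"
    and a: "a \<in> XSp p" and b: "b \<in> XSp p" and T: "0 \<le> T"
    and sol: "is_solution p \<alpha> w T a b v"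
  obtains Y where "ivp_solution (peri_field p \<alpha> w) T (X_embed p a, X_embed p b) Y"
    "\<And>t. t \<in> {0..T} \<Longrightarrow> fst (Y t) = X_embed p (v t)"
proof -
  obtain v1 v2 where D1: "X_has_derivative p T v v1" and D2: "X_has_derivative p T v1 v2"
    and eq: "\<And>t. t \<in> {0<..T} \<Longrightarrow> AE x in lborel. v2 t x = peri_rhs \<alpha> w (v t) x"
    and init: "AE x in lborel. v 0 x = a x" "AE x in lborel. v1 0 x = b x"
    using sol unfolding is_solution_def X_C2_def by blast
  have vX: "v t \<in> XSp p" "v1 t \<in> XSp p" "v2 t \<in> XSp p" if "t \<in> {0..T}" for t
    using D1 D2 that unfolding X_has_derivative_def by blast+
  define Y where "Y t = (X_embed p (v t), X_embed p (v1 t))" for t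
  define Y' where "Y' t = (X_embed p (v1 t), X_embed p (v2 t))" for t
  have "(Y has_vector_derivative Y' t) (at t within {0..T})" if "t \<in> {0..T}" for t
    unfolding Y_def[abs_def] Y'_def
    by (intro has_vector_derivative_Pair has_vector_derivative_X_embed[OF p D1 that]
        has_vector_derivative_X_embed[OF p D2 that])
  moreover have "Y' t = peri_field p \<alpha> w (Y t)" if t: "t \<in> {0<..T}" for t
  proof -
    have t': "t \<in> {0..T}" using t by auto
    have [measurable]: "\<alpha> \<in> borel_measurable borel" "w \<in> borel_measurable borel"
      "v t \<in> borel_measurable borel"
      using \<alpha> C1_differentiable_measurable[OF wC] XSp_measurable[OF vX(1)[OF t']] by auto
    have "AE x in lborel. peri_rhs \<alpha> w (X_component p (X_embed p (v t))) x = peri_rhs \<alpha> w (v t) x"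
      by (rule peri_rhs_cong_AE[OF _ _ X_component_measurable[OF p] _ AE_X_component_embed[OF p vX(1)[OF t']]])
        simp_all
    with eq[OF t] have "AE x in lborel. peri_rhs \<alpha> w (X_component p (X_embed p (v t))) x = v2 t x"
      by eventually_elim simp
    then have "X_embed p (peri_rhs \<alpha> w (X_component p (X_embed p (v t)))) = X_embed p (v2 t)"
      using X_embed_eq_iff[OF p peri_rhs_XSp[OF p \<alpha> wC w0 X_component_XSp[OF p]] vX(3)[OF t']] by blast
    then show ?thesis by (simp add: Y'_def Y_def peri_field_def)
  qed
  moreover have "Y 0 = (X_embed p a, X_embed p b)"
    using X_embed_eq_iff[OF p vX(1) a] X_embed_eq_iff[OF p vX(2) b] init T by (simp add: Y_def)
  ultimately have "ivp_solution (peri_field p \<alpha> w) T (X_embed p a, X_embed p b) Y"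
    unfolding ivp_solution_def by blast
  then show ?thesis using that by (simp add: Y_def)
qed

lemma norm_X_embed_Pair_le:
  "1 \<le> p \<Longrightarrow> a \<in> XSp p \<Longrightarrow> b \<in> XSp p \<Longrightarrow> norm (X_embed p a, X_embed p b) \<le> Xnorm p a + Xnorm p b"
  using norm_Pair_le[of "X_embed p a" "X_embed p b"] by (simp add: norm_X_embed)

lemma Xnorm_is_solution_diff_le:
  fixes \<alpha> w :: "real \<Rightarrow> real"
  assumes p: "1 \<le> p" and \<alpha>: "integrable lborel \<alpha>" and wC: "w C1_differentiable_on UNIV" and w0: "w 0 = 0"
    and data: "a \<in> XSp p" "b \<in> XSp p" "a' \<in> XSp p" "b' \<in> XSp p"
    and sols: "is_solution p \<alpha> w T a b u" "is_solution p \<alpha> w T a' b' u'" and t: "t \<in> {0..T}"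
    and lifted: "\<And>Y Y'. ivp_solution (peri_field p \<alpha> w) T (X_embed p a, X_embed p b) Y \<Longrightarrow>
      ivp_solution (peri_field p \<alpha> w) T (X_embed p a', X_embed p b') Y' \<Longrightarrow> norm (Y t - Y' t) \<le> C"
  shows "Xnorm p (\<lambda>x. u t x - u' t x) \<le> C"
proof -
  have T: "0 \<le> T" using t by simp
  obtain Y where Y: "ivp_solution (peri_field p \<alpha> w) T (X_embed p a, X_embed p b) Y"
    "fst (Y t) = X_embed p (u t)"
    using ivp_solution_of_is_solution[OF p \<alpha> wC w0 data(1,2) T sols(1)] t by metis
  obtain Y' where Y': "ivp_solution (peri_field p \<alpha> w) T (X_embed p a', X_embed p b') Y'"
    "fst (Y' t) = X_embed p (u' t)"
    using ivp_solution_of_is_solution[OF p \<alpha> wC w0 data(3,4) T sols(2)] t by metis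
  have ut: "u t \<in> XSp p" "u' t \<in> XSp p" using is_solution_XSp sols t by blast+
  have "Xnorm p (\<lambda>x. u t x - u' t x) = norm (fst (Y t - Y' t))"
    using norm_X_embed[OF p XSp_diff[OF p ut]] X_embed_diff[OF p ut] Y(2) Y'(2) by simp
  also have "\<dots> \<le> norm (Y t - Y' t)"
    using norm_fst_le[of "fst (Y t - Y' t)" "snd (Y t - Y' t)"] by (simp only: prod.collapse)
  also have "\<dots> \<le> C" by (rule lifted[OF Y(1) Y'(1)])
  finally show ?thesis .
qed

lemma peri_local_solutions:
  fixes \<alpha> w :: "real \<Rightarrow> real"
  assumes p: "1 \<le> p" and \<alpha>: "integrable lborel \<alpha>" and wC: "w C1_differentiable_on UNIV" and w0: "w 0 = 0"
    and R: "0 \<le> R"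
  obtains T where "T > 0"
    "\<And>a b. a \<in> XSp p \<Longrightarrow> b \<in> XSp p \<Longrightarrow> Xnorm p a + Xnorm p b \<le> R \<Longrightarrow> \<exists>u. is_solution p \<alpha> w T a b u"
    "\<And>a b a' b' u u' t. a \<in> XSp p \<Longrightarrow> b \<in> XSp p \<Longrightarrow> a' \<in> XSp p \<Longrightarrow> b' \<in> XSp p \<Longrightarrow>
       Xnorm p a + Xnorm p b \<le> R \<Longrightarrow> Xnorm p a' + Xnorm p b' \<le> R \<Longrightarrow>
       is_solution p \<alpha> w T a b u \<Longrightarrow> is_solution p \<alpha> w T a' b' u' \<Longrightarrow> t \<in> {0..T} \<Longrightarrow>
       Xnorm p (\<lambda>x. u t x - u' t x) \<le> 2 * (Xnorm p (\<lambda>x. a x - a' x) + Xnorm p (\<lambda>x. b x - b' x))"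
proof -
  obtain T where T: "T > 0"
    and ex: "\<And>z0. norm z0 \<le> R \<Longrightarrow> \<exists>z. ivp_solution (peri_field p \<alpha> w) T z0 z
        \<and> (\<forall>t\<in>{0..T}. (z has_vector_derivative peri_field p \<alpha> w (z t)) (at t within {0..T}))"
    and stable: "\<And>z0 y0 z y t. norm z0 \<le> R \<Longrightarrow> norm y0 \<le> R \<Longrightarrow> ivp_solution (peri_field p \<alpha> w) T z0 z \<Longrightarrow>
        ivp_solution (peri_field p \<alpha> w) T y0 y \<Longrightarrow> t \<in> {0..T} \<Longrightarrow> norm (z t - y t) \<le> 2 * norm (z0 - y0)"
    by (rule ivp_local_well_posed[OF peri_field_lipschitz[OF p \<alpha> wC w0] R]) (rule that)
  note norm_data = norm_X_embed_Pair_le[OF p]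
  show ?thesis
  proof (rule that[OF T])
    fix a b
    assume ab: "a \<in> XSp p" "b \<in> XSp p" "Xnorm p a + Xnorm p b \<le> R"
    then obtain Z where "\<forall>t\<in>{0..T}. (Z has_vector_derivative peri_field p \<alpha> w (Z t)) (at t within {0..T})"
      "Z 0 = (X_embed p a, X_embed p b)"
      using ex[of "(X_embed p a, X_embed p b)"] norm_data[of a b] by (auto simp: ivp_solution_def)
    then show "\<exists>u. is_solution p \<alpha> w T a b u"
      using is_solution_of_peri_field_solution[OF p \<alpha> wC w0 ab(1,2)] by blast
  next
    fix a b a' b' u u' t
    assume data: "a \<in> XSp p" "b \<in> XSp p" "a' \<in> XSp p" "b' \<in> XSp p"
      and small: "Xnorm p a + Xnorm p b \<le> R" "Xnorm p a' + Xnorm p b' \<le> R"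
      and sols: "is_solution p \<alpha> w T a b u" "is_solution p \<alpha> w T a' b' u'" and t: "t \<in> {0..T}"
    show "Xnorm p (\<lambda>x. u t x - u' t x) \<le> 2 * (Xnorm p (\<lambda>x. a x - a' x) + Xnorm p (\<lambda>x. b x - b' x))"
    proof (rule Xnorm_is_solution_diff_le[OF p \<alpha> wC w0 data sols t])
      fix Y Y'
      assume "ivp_solution (peri_field p \<alpha> w) T (X_embed p a, X_embed p b) Y"
        "ivp_solution (peri_field p \<alpha> w) T (X_embed p a', X_embed p b') Y'"
      then have "norm (Y t - Y' t) \<le> 2 * norm ((X_embed p a, X_embed p b) - (X_embed p a', X_embed p b'))"
        using stable[OF _ _ _ _ t] norm_data data small by (meson order_trans)
      also have "\<dots> \<le> 2 * (Xnorm p (\<lambda>x. a x - a' x) + Xnorm p (\<lambda>x. b x - b' x))"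
        using norm_data[OF XSp_diff[OF p data(1,3)] XSp_diff[OF p data(2,4)]]
        by (simp add: X_embed_diff[OF p data(1,3)] X_embed_diff[OF p data(2,4)])
      finally show "norm (Y t - Y' t) \<le> 2 * (Xnorm p (\<lambda>x. a x - a' x) + Xnorm p (\<lambda>x. b x - b' x))" .
    qed
  qed
qed

section \<open>Well-posedness\<close>

lemma Xnorm_add_le_of_close:
  assumes p: "1 \<le> p" and "a \<in> XSp p" "b \<in> XSp p" "\<phi> \<in> XSp p" "\<psi> \<in> XSp p"
  shows "Xnorm p a + Xnorm p b \<le> Xnorm p \<phi> + Xnorm p \<psi> + (Xnorm p (\<lambda>x. a x - \<phi> x) + Xnorm p (\<lambda>x. b x - \<psi> x))"
  using Xnorm_diff_triangle[OF p assms(2,4) XSp_zero] Xnorm_diff_triangle[OF p assms(3,5) XSp_zero] by simp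

lemma well_posedI:
  assumes p: "1 \<le> p" and \<phi>: "\<phi> \<in> XSp p" and \<psi>: "\<psi> \<in> XSp p"
    and R: "Xnorm p \<phi> + Xnorm p \<psi> < R" and C: "0 \<le> C"
    and exists: "\<And>a b. a \<in> XSp p \<Longrightarrow> b \<in> XSp p \<Longrightarrow> Xnorm p a + Xnorm p b \<le> R \<Longrightarrow> \<exists>u. is_solution p \<alpha> w T a b u"
    and stable: "\<And>a b a' b' u u' t. a \<in> XSp p \<Longrightarrow> b \<in> XSp p \<Longrightarrow> a' \<in> XSp p \<Longrightarrow> b' \<in> XSp p \<Longrightarrow>
       Xnorm p a + Xnorm p b \<le> R \<Longrightarrow> Xnorm p a' + Xnorm p b' \<le> R \<Longrightarrow>
       is_solution p \<alpha> w T a b u \<Longrightarrow> is_solution p \<alpha> w T a' b' u' \<Longrightarrow> t \<in> {0..T} \<Longrightarrow>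
       Xnorm p (\<lambda>x. u t x - u' t x) \<le> C * (Xnorm p (\<lambda>x. a x - a' x) + Xnorm p (\<lambda>x. b x - b' x))"
  shows "well_posed p \<alpha> w T \<phi> \<psi>"
proof -
  have data_ball: "Xnorm p \<phi> + Xnorm p \<psi> \<le> R" using R by simp
  obtain u where u: "is_solution p \<alpha> w T \<phi> \<psi> u" using exists[OF \<phi> \<psi> data_ball] by blast
  show ?thesis
    unfolding well_posed_def
  proof (intro exI[of _ u] conjI allI impI ballI u)
    fix v t
    assume v: "is_solution p \<alpha> w T \<phi> \<psi> v" and t: "t \<in> {0..T}"
    have "Xnorm p (\<lambda>x. v t x - u t x) \<le> C * (Xnorm p (\<lambda>x. \<phi> x - \<phi> x) + Xnorm p (\<lambda>x. \<psi> x - \<psi> x))"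
      by (rule stable[OF \<phi> \<psi> \<phi> \<psi> data_ball data_ball v u t])
    then have "Xnorm p (\<lambda>x. v t x - u t x) = 0"
      using Xnorm_nonneg[of p "\<lambda>x. v t x - u t x"] by (simp add: Xnorm_zero)
    then have "AE x in lborel. v t x - u t x = 0"
      by (rule AE_zero_of_Xnorm_zero[OF XSp_diff[OF p is_solution_XSp[OF v t] is_solution_XSp[OF u t]]])
    then show "AE x in lborel. v t x = u t x" by (auto elim: eventually_mono)
  next
    fix \<epsilon> :: real
    assume "\<epsilon> > 0"
    define \<delta> where "\<delta> = min (R - (Xnorm p \<phi> + Xnorm p \<psi>)) (\<epsilon> / (C + 1))"
    have \<delta>: "0 < \<delta>" "\<delta> \<le> R - (Xnorm p \<phi> + Xnorm p \<psi>)"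
      using R C \<open>\<epsilon> > 0\<close> by (auto simp: \<delta>_def)
    have "C * \<delta> \<le> C * (\<epsilon> / (C + 1))" using C by (intro mult_left_mono) (auto simp: \<delta>_def)
    also have "\<dots> < \<epsilon>" using C \<open>\<epsilon> > 0\<close> by (simp add: field_simps)
    finally have "C * \<delta> < \<epsilon>" .
    show "\<exists>\<delta>>0. \<forall>\<phi>' \<psi>'. \<phi>' \<in> XSp p \<and> \<psi>' \<in> XSp p \<and>
        Xnorm p (\<lambda>x. \<phi>' x - \<phi> x) + Xnorm p (\<lambda>x. \<psi>' x - \<psi> x) < \<delta> \<longrightarrow>
        (\<exists>v. is_solution p \<alpha> w T \<phi>' \<psi>' v) \<and>
        (\<forall>v. is_solution p \<alpha> w T \<phi>' \<psi>' v \<longrightarrow> (\<forall>t\<in>{0..T}. Xnorm p (\<lambda>x. v t x - u t x) < \<epsilon>))"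
    proof (intro exI[of _ \<delta>] conjI allI impI ballI \<delta>(1); elim conjE)
      fix \<phi>' \<psi>'
      assume data: "\<phi>' \<in> XSp p" "\<psi>' \<in> XSp p"
        and close: "Xnorm p (\<lambda>x. \<phi>' x - \<phi> x) + Xnorm p (\<lambda>x. \<psi>' x - \<psi> x) < \<delta>"
      have ball: "Xnorm p \<phi>' + Xnorm p \<psi>' \<le> R"
        using Xnorm_add_le_of_close[OF p data \<phi> \<psi>] close \<delta>(2) by simp
      show "\<exists>v. is_solution p \<alpha> w T \<phi>' \<psi>' v" by (rule exists[OF data ball])
      fix v t
      assume "is_solution p \<alpha> w T \<phi>' \<psi>' v" "t \<in> {0..T}"
      from stable[OF data \<phi> \<psi> ball data_ball this(1) u this(2)]
      have "Xnorm p (\<lambda>x. v t x - u t x) \<le> C * \<delta>"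
        using close C by (smt (verit) mult_left_mono)
      then show "Xnorm p (\<lambda>x. v t x - u t x) < \<epsilon>" using \<open>C * \<delta> < \<epsilon>\<close> by simp
    qed
  qed
qed

theorem theorem2p2:
  fixes p :: ennreal and \<alpha> w \<phi> \<psi> :: "real \<Rightarrow> real"
  assumes "1 \<le> p"
    and "integrable lborel \<alpha>"
    and "w C1_differentiable_on UNIV" and "w 0 = 0"
    and "\<phi> \<in> XSp p" and "\<psi> \<in> XSp p"
  shows "\<exists>T>0. well_posed p \<alpha> w T \<phi> \<psi>"
proof -
  define R where "R = Xnorm p \<phi> + Xnorm p \<psi> + 1"
  have "0 \<le> R" using Xnorm_nonneg[of p] by (simp add: R_def add_nonneg_nonneg)
  then obtain T where "T > 0"
    and exists: "\<And>a b. a \<in> XSp p \<Longrightarrow> b \<in> XSp p \<Longrightarrow> Xnorm p a + Xnorm p b \<le> R \<Longrightarrow> \<exists>u. is_solution p \<alpha> w T a b u"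
    and stable: "\<And>a b a' b' u u' t. a \<in> XSp p \<Longrightarrow> b \<in> XSp p \<Longrightarrow> a' \<in> XSp p \<Longrightarrow> b' \<in> XSp p \<Longrightarrow>
       Xnorm p a + Xnorm p b \<le> R \<Longrightarrow> Xnorm p a' + Xnorm p b' \<le> R \<Longrightarrow>
       is_solution p \<alpha> w T a b u \<Longrightarrow> is_solution p \<alpha> w T a' b' u' \<Longrightarrow> t \<in> {0..T} \<Longrightarrow>
       Xnorm p (\<lambda>x. u t x - u' t x) \<le> 2 * (Xnorm p (\<lambda>x. a x - a' x) + Xnorm p (\<lambda>x. b x - b' x))"
    by (rule peri_local_solutions[OF assms(1-4)]) (rule that)
  have "well_posed p \<alpha> w T \<phi> \<psi>"
    by (rule well_posedI[where R=R and C=2]) (fact assms exists stable | simp add: R_def)+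
  with \<open>T > 0\<close> show ?thesis by blast
qed

end
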